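(* Let $K$ be a field, $A=\{\alpha_1,\dots,\alpha_m\}\subset K$, $B=\{\beta_1,\dots,\beta_n\}\subset K$ finite sets with $|A|=m$, $|B|=n$, $f=\prod_{i}(x-\alpha_i)$, $g=\prod_j(x-\beta_j)$. Let $0\le p\le m$, $0\le q\le n$, set $d:=p+q$ and assume $0\le d\le n-1$. Then $$\operatorname{Syl}_{p,q}(A,B)=\begin{cases}(-1)^{p(m-d)}\binom{d}{p}\operatorname{Sres}_d(f,g) & \text{if } 0\le d\le\min\{m,n-1\},\\ 0 & \text{if } m<d<n-1,\\ (-1)^{(p+1)(m+n-1)}\binom{m}{p}f & \text{if } m<d=n-1.\end{cases}$$
   Context: For finite sets $Y,Z$, $\mathcal{R}(Y,Z):=\prod_{y\in Y,z\in Z}(y-z)$ (equal to $1$ if $Y$ or $Z$ is empty), and $\mathcal{R}(x,Z):=\mathcal{R}(\{x\},Z)$. For $0\le p\le m$, $0\le q\le n$, $$\operatorname{Syl}_{p,q}(A,B)(x):=\sum_{\substack{A'\subset A,\ B'\subset B\\ |A'|=p,\ |B'|=q}}\mathcal{R}(A',B')\,\mathcal{R}(A\setminus A',B\setminus B')\,\frac{\mathcal{R}(x,A')\,\mathcal{R}(x,B')}{\mathcal{R}(A',A\setminus A')\,\mathcal{R}(B',B\setminus B')}.$$ Write $f=\sum_{i=0}^m f_ix^i$, $g=\sum_{i=0}^ng_ix^i$ with $f_i=g_i=0$ outside the natural ranges. For $d\le\min\{m,n\}$ if $m\ne n$, or $d<m=n$, the subresultant $\operatorname{Sres}_d(f,g)(x)$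 is the determinant of the $(m+n-2d)\times(m+n-2d)$ matrix with rows $x^jf(x)$ for $j=n-d-1,\dots,0$ followed by rows $x^jg(x)$ for $j=m-d-1,\dots,0$, where the row of a polynomial $h$ has as first $m+n-2d-1$ entries the coefficients of $x^{m+n-d-1},\dots,x^{d+1}$ in $h$, and as last entry $h(x)$. *)

theory Defs
  imports "HOL-Computational_Algebra.Polynomial" "Jordan_Normal_Form.Determinant"
begin

definition Res :: "'a::field set \<Rightarrow> 'a set \<Rightarrow> 'a" where
  "Res Y Z = (\<Prod>(y,z)\<in>Y \<times> Z. y - z)"

definition Rpoly :: "'a::field set \<Rightarrow> 'a poly" where
  "Rpoly Z = (\<Prod>z\<in>Z. [:- z, 1:])"

definition Syl :: "nat \<Rightarrow> nat \<Rightarrow> 'a::field set \<Rightarrow> 'a set \<Rightarrow> 'a poly" where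
  "Syl p q A B = (\<Sum>(A',B') \<in> {(A',B'). A' \<subseteq> A \<and> B' \<subseteq> B \<and> card A' = p \<and> card B' = q}.
     smult (Res A' B' * Res (A - A') (B - B') / (Res A' (A - A') * Res B' (B - B')))
       (Rpoly A' * Rpoly B'))"

text \<open>Subresultant: determinant of the (m+n-2d) square matrix whose rows are
  x^j f (j = n-d-1,...,0) then x^j g (j = m-d-1,...,0); the row of h has as first
  m+n-2d-1 entries the coefficients of x^(m+n-d-1),...,x^(d+1) of h, and as last entry h.\<close>
definition Sres :: "nat \<Rightarrow> 'a::field poly \<Rightarrow> 'a poly \<Rightarrow> 'a poly" where
  "Sres d f g = (let m = degree f; n = degree g; k = m + n - 2 * d;
      rowpoly = (\<lambda>i. if i < n - d then monom 1 (n - d - 1 - i) * f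
                      else monom 1 (m - d - 1 - (i - (n - d))) * g)
    in det (mat k k (\<lambda>(i,j). if j = k - 1 then rowpoly i
                              else [: coeff (rowpoly i) (m + n - d - 1 - j) :])))"

end

theory Submission
  imports Defs
begin

text \<open>
  Induction on \<open>|A| + |B|\<close>. If \<open>A\<close> and \<open>B\<close> share a root \<open>c\<close>, both sides are divisible
  by \<open>x - c\<close> (for the subresultant since \<open>Sres\<^sub>d((x - c) f, (x - c) g) = (x - c) Sres\<^sub>d\<^sub>-\<^sub>1(f, g)\<close>),
  and dividing it out turns them into the same Pascal-type combination of the
  statements for \<open>(A - {c}, B - {c})\<close>. If \<open>A = A\<^sub>0 \<union> {y}\<close> is disjoint from \<open>B\<close>, let the new
  root \<open>y\<close> vary: after multiplication by \<open>R(y, A\<^sub>0)\<close> both sides become polynomials in \<open>y\<close> of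
  degree \<open>< |A\<^sub>0| + |B|\<close>, which vanish on \<open>A\<^sub>0\<close> and agree on \<open>B\<close> by the common-root case;
  hence they coincide. The base cases are \<open>Syl\<^sub>0\<^sub>,\<^sub>0(A, B) = R(A, B) = Sres\<^sub>0(f, g)\<close> and the
  Lagrange interpolation identities for \<open>A = {}\<close>.
\<close>

section \<open>The summands of \<open>Syl\<close>\<close>

definition ksubsets :: "nat \<Rightarrow> 'b set \<Rightarrow> 'b set set" where
  "ksubsets k A = {A'. A' \<subseteq> A \<and> card A' = k}"

definition Res_at :: "'a::field \<Rightarrow> 'a set \<Rightarrow> 'a" where
  "Res_at c S = (\<Prod>s\<in>S. c - s)"

definition Syl_coeff :: "'a::field set \<Rightarrow> 'a set \<Rightarrow> 'a set \<Rightarrow> 'a set \<Rightarrow> 'a" where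
  "Syl_coeff A B A' B' = Res A' B' * Res (A - A') (B - B') / (Res A' (A - A') * Res B' (B - B'))"

definition Syl_term :: "'a::field set \<Rightarrow> 'a set \<Rightarrow> 'a set \<Rightarrow> 'a set \<Rightarrow> 'a poly" where
  "Syl_term A B A' B' = smult (Syl_coeff A B A' B') (Rpoly A' * Rpoly B')"

lemma finite_ksubsets[simp]: "finite A \<Longrightarrow> finite (ksubsets k A)"
  unfolding ksubsets_def by (rule finite_subset[of _ "Pow A"]) auto

lemma ksubsetsD: "X \<in> ksubsets k A \<Longrightarrow> X \<subseteq> A \<and> card X = k"
  unfolding ksubsets_def by auto

lemma ksubsets_0: "finite A \<Longrightarrow> ksubsets 0 A = {{}}"
  unfolding ksubsets_def by (auto simp: card_0_eq rev_finite_subset)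

lemma ksubsets_eq_empty: "finite A \<Longrightarrow> card A < k \<Longrightarrow> ksubsets k A = {}"
  unfolding ksubsets_def using card_mono[of A] by (auto simp: not_le[symmetric])

lemma Syl_eq_sum_ksubsets: "Syl p q A B = (\<Sum>A'\<in>ksubsets p A. \<Sum>B'\<in>ksubsets q B. Syl_term A B A' B')"
proof -
  have "{(A',B'). A' \<subseteq> A \<and> B' \<subseteq> B \<and> card A' = p \<and> card B' = q} = ksubsets p A \<times> ksubsets q B"
    unfolding ksubsets_def by auto
  thus ?thesis unfolding Syl_def Syl_term_def Syl_coeff_def by (simp add: sum.cartesian_product)
qed

lemma ksubsets_insert:
  assumes "finite A" "c \<notin> A"
  shows "ksubsets p (insert c A) = (if p = 0 then {} else insert c ` ksubsets (p-1) A) \<union> ksubsets p A"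
proof (rule equalityI; rule subsetI)
  fix X assume "X \<in> ksubsets p (insert c A)"
  hence X: "X \<subseteq> insert c A" "card X = p" unfolding ksubsets_def by auto
  have fX: "finite X" using X(1) assms(1) finite_subset by blast
  show "X \<in> (if p = 0 then {} else insert c ` ksubsets (p-1) A) \<union> ksubsets p A"
  proof (cases "c \<in> X")
    case True
    have "X - {c} \<in> ksubsets (p-1) A" "p \<noteq> 0"
      using True fX X unfolding ksubsets_def by (auto simp: card_gt_0_iff)
    moreover have "X = insert c (X - {c})" using True by auto
    ultimately show ?thesis by (metis UnI1 image_eqI)
  next
    case False thus ?thesis using X unfolding ksubsets_def by auto
  qed
next
  fix X assume "X \<in> (if p = 0 then {} else insert c ` ksubsets (p-1) A) \<union> ksubsets p A"
  thus "X \<in> ksubsets p (insert c A)"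
  proof
    assume "X \<in> (if p = 0 then {} else insert c ` ksubsets (p-1) A)"
    then obtain Y where Y: "p \<noteq> 0" "Y \<subseteq> A" "card Y = p - 1" "X = insert c Y"
      unfolding ksubsets_def by (auto split: if_splits)
    have "finite Y" "c \<notin> Y" using Y assms finite_subset by auto
    thus ?thesis using Y unfolding ksubsets_def by auto
  qed (auto simp: ksubsets_def)
qed

lemma sum_ksubsets_insert:
  assumes "finite A" "c \<notin> A"
  shows "(\<Sum>X\<in>ksubsets p (insert c A). h X) =
    (if p = 0 then 0 else (\<Sum>X\<in>ksubsets (p-1) A. h (insert c X))) + (\<Sum>X\<in>ksubsets p A. h X)"
proof -
  have disj: "(if p = 0 then {} else insert c ` ksubsets (p-1) A) \<inter> ksubsets p A = {}"
    using assms(2) unfolding ksubsets_def by auto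
  have "inj_on (insert c) (ksubsets (p-1) A)"
    using assms(2) unfolding ksubsets_def by (intro inj_onI) (metis Diff_insert_absorb subsetD mem_Collect_eq)
  thus ?thesis
    unfolding ksubsets_insert[OF assms] using disj assms
    by (subst sum.union_disjoint) (auto simp: sum.reindex)
qed

lemma sum_ksubsets_remove:
  assumes "finite A" "a \<in> A"
  shows "(\<Sum>X\<in>ksubsets p A. h X) =
    (if p = 0 then 0 else (\<Sum>X\<in>ksubsets (p-1) (A - {a}). h (insert a X))) + (\<Sum>X\<in>ksubsets p (A - {a}). h X)"
  using sum_ksubsets_insert[of "A - {a}" a, where p = p and h = h] assms by (simp add: insert_absorb)

lemma Res_eq_nested_prod: "Res Y Z = (\<Prod>y\<in>Y. \<Prod>z\<in>Z. y - z)"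
  unfolding Res_def by (simp add: prod.cartesian_product)

lemma Res_empty[simp]: "Res {} Z = 1" "Res Y {} = 1"
  unfolding Res_eq_nested_prod by auto

lemma Res_insert_left: "finite Y \<Longrightarrow> c \<notin> Y \<Longrightarrow> Res (insert c Y) Z = Res_at c Z * Res Y Z"
  unfolding Res_eq_nested_prod Res_at_def by simp

lemma Res_insert_right: "finite Z \<Longrightarrow> c \<notin> Z \<Longrightarrow>
   Res Y (insert c Z) = (\<Prod>y\<in>Y. y - c) * Res Y Z"
  unfolding Res_eq_nested_prod by (simp add: prod.distrib)

lemma prod_diff_eq_Res_at: "finite S \<Longrightarrow> (\<Prod>y\<in>S. y - c) = (-1)^card S * Res_at c S"
proof -
  assume "finite S"
  have "(\<Prod>y\<in>S. y - c) = (\<Prod>y\<in>S. (-1) * (c - y))" by (rule prod.cong) auto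
  also have "\<dots> = (-1)^card S * Res_at c S" unfolding Res_at_def prod.distrib by simp
  finally show ?thesis .
qed

lemma Res_at_eq_0: "finite S \<Longrightarrow> c \<in> S \<Longrightarrow> Res_at c S = 0"
  unfolding Res_at_def by (rule prod_zero) auto

lemma Res_at_nonzero: "c \<notin> S \<Longrightarrow> Res_at (c::'a::field) S \<noteq> 0"
  unfolding Res_at_def by (cases "finite S") (auto simp: prod_zero_iff)

lemma Res_at_split: "finite S \<Longrightarrow> T \<subseteq> S \<Longrightarrow> Res_at c S = Res_at c T * Res_at c (S - T)"
  unfolding Res_at_def by (metis prod.subset_diff mult.commute)

lemma Res_eq_0: "finite Y \<Longrightarrow> finite Z \<Longrightarrow> c \<in> Y \<Longrightarrow> c \<in> Z \<Longrightarrow> Res Y Z = 0"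
  unfolding Res_eq_nested_prod by (rule prod_zero, simp, rule bexI[of _ c], rule prod_zero, auto)

lemma Res_nonzero: "Y \<inter> Z = {} \<Longrightarrow> Res Y (Z::'a::field set) \<noteq> 0"
  unfolding Res_def by (cases "finite (Y \<times> Z)") (auto simp: prod_zero_iff)

lemma Rpoly_empty[simp]: "Rpoly {} = 1"
  unfolding Rpoly_def by simp

lemma Rpoly_insert: "finite S \<Longrightarrow> c \<notin> S \<Longrightarrow> Rpoly (insert c S) = [:-c,1:] * Rpoly S"
  unfolding Rpoly_def by simp

lemma poly_Rpoly: "poly (Rpoly S) c = Res_at c S"
  unfolding Rpoly_def Res_at_def poly_prod by simp

lemma monic_Rpoly: "finite S \<Longrightarrow> degree (Rpoly S) = card S \<and> lead_coeff (Rpoly S) = 1"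
proof (induction S rule: finite_induct)
  case (insert c S)
  have d: "degree ([:-c,1:] * Rpoly S) = degree [:-c,1:] + degree (Rpoly S)"
    by (rule degree_mult_eq) (use insert in auto)
  have l: "lead_coeff ([:-c,1:] * Rpoly S) = lead_coeff [:-c,1:] * lead_coeff (Rpoly S)"
    by (rule lead_coeff_mult)
  show ?case unfolding Rpoly_insert[OF insert(1,2)] using d l insert(1,2) insert.IH
    by (simp add: coeff_eq_0) (metis insert.IH)
qed simp

lemma degree_Rpoly[simp]: "finite S \<Longrightarrow> degree (Rpoly S) = card S"
  using monic_Rpoly by blast

lemma lead_coeff_Rpoly[simp]: "finite S \<Longrightarrow> lead_coeff (Rpoly S) = 1"
  using monic_Rpoly by blast

lemma Rpoly_nonzero[simp]: "Rpoly S \<noteq> 0"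
  unfolding Rpoly_def by (cases "finite S") (auto simp: prod_zero_iff)

section \<open>Subresultant matrices\<close>

text \<open>
  The matrix of \<open>Sres\<close> with rows given by polynomials \<open>r i\<close> (coefficients of degrees
  \<open>E, E - 1, \<dots>\<close>), except that the last column holds \<open>v i\<close> instead of \<open>r i\<close>. Expanding along
  that column shows that the determinant is linear in \<open>v\<close>, with cofactors that do not depend on \<open>v\<close>.
\<close>
definition sylv_mat_col :: "nat \<Rightarrow> nat \<Rightarrow> (nat \<Rightarrow> 'a::comm_ring_1 poly) \<Rightarrow> (nat \<Rightarrow> 'a poly) \<Rightarrow> 'a poly mat" where
  "sylv_mat_col k E r v = mat k k (\<lambda>(i,j). if j = k - 1 then v i else [:coeff (r i) (E - j):])"

abbreviation sylv_mat where "sylv_mat k E r \<equiv> sylv_mat_col k E r r"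

definition sres_row :: "nat \<Rightarrow> nat \<Rightarrow> nat \<Rightarrow> 'a::comm_ring_1 poly \<Rightarrow> 'a poly \<Rightarrow> nat \<Rightarrow> 'a poly" where
  "sres_row m n d f g i = (if i < n - d then monom 1 (n - d - 1 - i) * f
                      else monom 1 (m - d - 1 - (i - (n - d))) * g)"

lemma Sres_eq_det_sylv_mat: "Sres d f g = det (sylv_mat (degree f + degree g - 2*d) (degree f + degree g - d - 1)
    (sres_row (degree f) (degree g) d f g))"
  unfolding Sres_def Let_def sylv_mat_col_def sres_row_def by (rule arg_cong[of _ _ det], rule cong_mat) auto

lemma sylv_mat_col_cong: "(\<And>i. i < k \<Longrightarrow> r i = r' i) \<Longrightarrow> (\<And>i. i < k \<Longrightarrow> v i = v' i) \<Longrightarrow>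
   sylv_mat_col k E r v = sylv_mat_col k E r' v'"
  unfolding sylv_mat_col_def by (rule cong_mat) auto

lemma sylv_mat_col_carrier[simp]: "sylv_mat_col k E r v \<in> carrier_mat k k" unfolding sylv_mat_col_def by auto
lemma sylv_mat_col_dim[simp]: "dim_row (sylv_mat_col k E r v) = k" "dim_col (sylv_mat_col k E r v) = k" unfolding sylv_mat_col_def by auto

lemma cofactor_sylv_mat_col_indep: "cofactor (sylv_mat_col k E r v) i (k - 1) = cofactor (sylv_mat_col k E r v') i (k - 1)"
  unfolding cofactor_def mat_delete_def sylv_mat_col_def
  by (rule arg_cong[of _ _ "\<lambda>x. _ * det x"], rule cong_mat) auto

lemma degree_cofactor_sylv_mat_col: "degree (cofactor (sylv_mat_col k E r v) i (k - 1)) = 0"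
proof -
  have "degree (det (mat_delete (sylv_mat_col k E r v) i (k - 1))) \<le> 0 * (k - 1)"
    by (rule degree_det_le[of "k - 1"], auto simp: mat_delete_def sylv_mat_col_def)
  hence "degree (det (mat_delete (sylv_mat_col k E r v) i (k - 1))) = 0" by simp
  moreover have "degree ((-1::'a poly)^(i + (k-1))) = 0"
    using degree_power_le[of "-1::'a poly" "i+(k-1)"] by simp
  ultimately show ?thesis unfolding cofactor_def
    by (metis (no_types) add_0 degree_mult_le le_zero_eq)
qed

definition sylv_cofactor :: "nat \<Rightarrow> nat \<Rightarrow> (nat \<Rightarrow> 'a::comm_ring_1 poly) \<Rightarrow> nat \<Rightarrow> 'a" where
  "sylv_cofactor k E r i = coeff (cofactor (sylv_mat_col k E r (\<lambda>_. 0)) i (k - 1)) 0"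

lemma cofactor_sylv_mat_col: "cofactor (sylv_mat_col k E r v) i (k - 1) = [:sylv_cofactor k E r i:]"
  unfolding sylv_cofactor_def cofactor_sylv_mat_col_indep[of k E r v i "\<lambda>_. 0"]
  using degree_0_id[OF degree_cofactor_sylv_mat_col] by metis

lemma det_sylv_mat_col: assumes "k \<ge> 1"
  shows "det (sylv_mat_col k E r v) = (\<Sum>i<k. smult (sylv_cofactor k E r i) (v i))"
proof -
  have "det (sylv_mat_col k E r v) = (\<Sum>i<k. sylv_mat_col k E r v $$ (i, k-1) * cofactor (sylv_mat_col k E r v) i (k - 1))"
    by (rule laplace_expansion_column[OF sylv_mat_col_carrier]) (use assms in auto)
  also have "\<dots> = (\<Sum>i<k. smult (sylv_cofactor k E r i) (v i))"
    unfolding cofactor_sylv_mat_col using assms by (intro sum.cong) (auto simp: sylv_mat_col_def)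
  finally show ?thesis .
qed

lemma det_sylv_mat_col_coeff_col:
  assumes k: "k \<ge> 1" and j: "j < k - 1" and v: "\<And>i. i < k \<Longrightarrow> v i = [:coeff (r i) (E - j):]"
  shows "det (sylv_mat_col k E r v) = 0"
proof (rule det_identical_columns[OF sylv_mat_col_carrier, of j "k - 1"])
  show "col (sylv_mat_col k E r v) j = col (sylv_mat_col k E r v) (k - 1)"
    by (rule eq_vecI) (use k j v in \<open>auto simp: sylv_mat_col_def\<close>)
qed (use k j in auto)

lemma degree_det_sylv_mat:
  assumes k: "k \<ge> 1" and E: "k - 1 \<le> E" and deg: "\<And>i. i < k \<Longrightarrow> degree (r i) \<le> E"
  shows "degree (det (sylv_mat k E r)) \<le> E + 1 - k"
proof (rule degree_le, intro allI impI)
  fix e assume e: "E + 1 - k < e"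
  have "coeff (det (sylv_mat k E r)) e = (\<Sum>i<k. sylv_cofactor k E r i * coeff (r i) e)"
    unfolding det_sylv_mat_col[OF k] coeff_sum by simp
  also have "\<dots> = coeff (det (sylv_mat_col k E r (\<lambda>i. [:coeff (r i) e:]))) 0"
    unfolding det_sylv_mat_col[OF k] coeff_sum by simp
  also have "\<dots> = 0"
  proof (cases "e \<le> E")
    case True
    have "det (sylv_mat_col k E r (\<lambda>i. [:coeff (r i) e:])) = 0"
      by (rule det_sylv_mat_col_coeff_col[OF k, of "E - e"]) (use True e E k in auto)
    thus ?thesis by simp
  next
    case False
    hence "\<And>i. i < k \<Longrightarrow> coeff (r i) e = 0" using deg by (meson coeff_eq_0 le_less_trans not_le)
    thus ?thesis unfolding det_sylv_mat_col[OF k] coeff_sum by simp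
  qed
  finally show "coeff (det (sylv_mat k E r)) e = 0" .
qed

lemma coeff_linear_mult_Suc: fixes p :: "'a::comm_ring_1 poly" shows "coeff ([:a, 1:] * p) (Suc n) = coeff p n + a * coeff p (Suc n)"
  by (simp add: mult_pCons_left add.commute)

lemma sum_two_delta: "j < k \<Longrightarrow>
  (\<Sum>l\<in>{0..<k}. f l * ((if l = j then 1 else 0) + (if Suc l = j then x else 0))) =
   f j + (if j = 0 then 0 else f (j - 1) * (x::'b::comm_ring_1))"
proof -
  assume j: "j < k"
  have "(\<Sum>l\<in>{0..<k}. f l * ((if l = j then 1 else 0) + (if Suc l = j then x else 0))) =
    (\<Sum>l\<in>{0..<k}. (if l = j then f l else 0) + (if Suc l = j then f l * x else 0))"
    by (rule sum.cong) auto
  also have "\<dots> = f j + (\<Sum>l\<in>{0..<k}. (if Suc l = j then f l * x else 0))"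
    using j by (simp add: sum.distrib sum.delta)
  also have "(\<Sum>l\<in>{0..<k}. (if Suc l = j then f l * x else 0)) = (if j = 0 then 0 else f (j - 1) * x)"
  proof (cases j)
    case (Suc j')
    have "(\<Sum>l\<in>{0..<k}. (if Suc l = j then f l * x else 0)) = (\<Sum>l\<in>{0..<k}. (if l = j' then f l * x else 0))"
      by (rule sum.cong) (auto simp: Suc)
    thus ?thesis using j Suc by (simp add: sum.delta)
  qed simp
  finally show ?thesis .
qed

text \<open>Right multiplication by \<open>shift_mat k c\<close> multiplies every row polynomial by \<open>x - c\<close>.\<close>
definition shift_mat :: "nat \<Rightarrow> 'a::comm_ring_1 \<Rightarrow> 'a poly mat" where
  "shift_mat k c = mat k k (\<lambda>(l,j). if j = k - 1 then (if l = k - 1 then [:-c,1:] else 0)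
      else (if l = j then 1 else 0) + (if Suc l = j then [:-c:] else 0))"

lemma shift_mat_dim[simp]: "dim_row (shift_mat k c) = k" "dim_col (shift_mat k c) = k" unfolding shift_mat_def by auto

lemma det_shift_mat: assumes k: "k \<ge> 1" shows "det (shift_mat k c) = [:-c,1:]"
proof -
  have ut: "upper_triangular (shift_mat k c)" unfolding upper_triangular_def shift_mat_def by auto
  have "det (shift_mat k c) = (\<Prod>i = 0..<k. shift_mat k c $$ (i,i))"
    by (subst det_upper_triangular[OF ut, of k], auto simp: shift_mat_def prod_list_diag_prod)
  also have "\<dots> = (\<Prod>i = 0..<Suc (k-1). shift_mat k c $$ (i,i))" using k by simp
  also have "\<dots> = (\<Prod>i = 0..<k-1. shift_mat k c $$ (i,i)) * shift_mat k c $$ (k-1,k-1)"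
    by (rule prod.atLeast0_lessThan_Suc)
  also have "(\<Prod>i = 0..<k-1. shift_mat k c $$ (i,i)) = 1"
    by (rule prod.neutral, auto simp: shift_mat_def)
  also have "shift_mat k c $$ (k-1,k-1) = [:-c,1:]" using k by (auto simp: shift_mat_def)
  finally show ?thesis by simp
qed

lemma sylv_mat_linear_factor:
  assumes k: "k \<ge> 1" and E: "k - 1 \<le> E" "1 \<le> E"
    and deg: "\<And>i. i < k \<Longrightarrow> degree (r i) \<le> E - 1"
  shows "sylv_mat k E (\<lambda>i. [:-c,1:] * r i) = sylv_mat k (E - 1) r * shift_mat k c"
proof (rule eq_matI)
  fix i j assume i: "i < dim_row (sylv_mat k (E - 1) r * shift_mat k c)" and j: "j < dim_col (sylv_mat k (E - 1) r * shift_mat k c)"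
  hence i: "i < k" and j: "j < k" by (auto simp: shift_mat_def sylv_mat_col_def)
  have "(sylv_mat k (E - 1) r * shift_mat k c) $$ (i,j) = (\<Sum>l\<in>{0..<k}. sylv_mat k (E - 1) r $$ (i,l) * shift_mat k c $$ (l,j))"
    using i j by (simp add: scalar_prod_def)
  also have "\<dots> = sylv_mat k E (\<lambda>i. [:-c,1:] * r i) $$ (i,j)"
  proof (cases "j = k - 1")
    case True
    have "(\<Sum>l\<in>{0..<k}. sylv_mat k (E - 1) r $$ (i,l) * shift_mat k c $$ (l,j)) =
          (\<Sum>l\<in>{0..<k}. if l = k - 1 then sylv_mat k (E - 1) r $$ (i,l) * [:-c,1:] else 0)"
      by (rule sum.cong, auto simp: shift_mat_def True)
    also have "\<dots> = sylv_mat k (E - 1) r $$ (i,k-1) * [:-c,1:]" using k by (simp add: sum.delta)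
    finally show ?thesis using True i k by (simp add: sylv_mat_col_def mult.commute)
  next
    case False
    hence jk: "j < k - 1" using j by auto
    have "(\<Sum>l\<in>{0..<k}. sylv_mat k (E - 1) r $$ (i,l) * shift_mat k c $$ (l,j)) =
          (\<Sum>l\<in>{0..<k}. sylv_mat k (E - 1) r $$ (i,l) * ((if l = j then 1 else 0) + (if Suc l = j then [:-c:] else 0)))"
      by (rule sum.cong) (use j jk in \<open>auto simp: shift_mat_def\<close>)
    also have "\<dots> = sylv_mat k (E - 1) r $$ (i,j) + (if j = 0 then 0 else sylv_mat k (E - 1) r $$ (i,j - 1) * [:-c:])"
      by (rule sum_two_delta[OF j])
    also have "\<dots> = [:coeff (r i) (E - 1 - j) + (if j = 0 then 0 else - c * coeff (r i) (E - j)):]"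
      using i jk E by (auto simp: sylv_mat_col_def)
    also have "\<dots> = [:coeff ([:-c,1:] * r i) (E - j):]"
    proof -
      have Ej: "E - j = Suc (E - 1 - j)" using jk E by auto
      have "coeff ([:-c,1:] * r i) (E - j) = coeff (r i) (E - 1 - j) + (- c) * coeff (r i) (E - j)"
        unfolding Ej coeff_linear_mult_Suc by simp
      moreover have "j = 0 \<Longrightarrow> coeff (r i) E = 0"
        using deg[OF i] E by (intro coeff_eq_0) auto
      ultimately show ?thesis by auto
    qed
    finally show ?thesis using i j False by (simp add: sylv_mat_col_def)
  qed
  finally show "sylv_mat k E (\<lambda>i. [:-c,1:] * r i) $$ (i,j) = (sylv_mat k (E - 1) r * shift_mat k c) $$ (i,j)" by simp
qed (auto simp: shift_mat_def)

lemma det_sylv_mat_linear_factor: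
  assumes "k \<ge> 1" "k - 1 \<le> E" "1 \<le> E" "\<And>i. i < k \<Longrightarrow> degree (r i) \<le> E - 1"
  shows "det (sylv_mat k E (\<lambda>i. [:-c,1:] * r i)) = [:-c,1:] * det (sylv_mat k (E - 1) r)"
proof -
  have "sylv_mat k E (\<lambda>i. [:-c,1:] * r i) = sylv_mat k (E - 1) r * shift_mat k c"
    by (rule sylv_mat_linear_factor) (use assms in auto)
  hence "det (sylv_mat k E (\<lambda>i. [:-c,1:] * r i)) = det (sylv_mat k (E - 1) r) * det (shift_mat k c)"
    by (simp add: det_mult[of _ k] shift_mat_def)
  also have "\<dots> = [:-c,1:] * det (sylv_mat k (E - 1) r)"
    unfolding det_shift_mat[OF assms(1)] by (rule mult.commute)
  finally show ?thesis .
qed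

lemma det_sylv_mat_linear_factor_eq_0:
  fixes c :: "'a::idom"
  assumes k: "k \<ge> 1" and deg: "\<And>i. i < k \<Longrightarrow> degree ([:-c,1:] * r i) \<le> k - 1"
  shows "det (sylv_mat k (k - 1) (\<lambda>i. [:-c,1:] * r i)) = 0"
proof -
  define Q where "Q = (\<lambda>i. [:-c,1:] * r i)"
  define H where "H = (\<Sum>i<k. smult (sylv_cofactor k (k-1) Q i) (r i))"
  have eq: "det (sylv_mat k (k - 1) Q) = [:-c,1:] * H"
    unfolding det_sylv_mat_col[OF k] H_def Q_def by (simp add: sum_distrib_left mult_smult_right)
  have "degree (det (sylv_mat k (k - 1) Q)) \<le> k - 1 + 1 - k"
  proof (rule degree_det_sylv_mat[OF k])
    fix i assume "i < k" thus "degree (Q i) \<le> k - 1" unfolding Q_def by (rule deg)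
  qed simp
  hence d0: "degree ([:-c,1:] * H) = 0" unfolding eq using k by simp
  have "H = 0"
  proof (rule ccontr)
    assume "H \<noteq> 0"
    hence "degree ([:-c,1:] * H) = degree [:-c,1:] + degree H" by (intro degree_mult_eq) auto
    thus False using d0 by simp
  qed
  thus ?thesis unfolding Q_def[symmetric] eq by simp
qed

lemma degree_monom_mult_le: "degree (monom 1 a * p) \<le> a + degree p"
  by (rule order.trans[OF degree_mult_le], rule add_right_mono, rule degree_monom_le)

lemma degree_sres_row:
  assumes f: "degree f = m" and g: "degree g = n" and d: "d < n" "d \<le> m" and i: "i < m + n - 2 * d"
  shows "degree (sres_row m n d f g i) \<le> m + n - d - 1"
proof (cases "i < n - d")
  case True
  thus ?thesis unfolding sres_row_def using degree_monom_mult_le[of "n - d - 1 - i" f] f d by auto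
next
  case False
  thus ?thesis unfolding sres_row_def using degree_monom_mult_le[of "m - d - 1 - (i - (n - d))" g] g d i
    by auto
qed

lemma degree_linear_mult: "(p::'a::field poly) \<noteq> 0 \<Longrightarrow> degree ([:-c,1:] * p) = degree p + 1"
  by (subst degree_mult_eq, auto simp del: mult_pCons_left)

lemma Sres_linear_factor:
  fixes f0 g0 :: "'a::field poly"
  assumes nz: "f0 \<noteq> 0" "g0 \<noteq> 0"
    and d: "1 \<le> d" "d \<le> degree f0 + 1" "d < degree g0 + 1"
  shows "Sres d ([:-c,1:] * f0) ([:-c,1:] * g0) = [:-c,1:] * Sres (d - 1) f0 g0"
proof -
  define m0 n0 where "m0 = degree f0" and "n0 = degree g0"
  define k E where "k = (m0 + 1) + (n0 + 1) - 2 * d" and "E = (m0 + 1) + (n0 + 1) - d - 1"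
  have degs: "degree ([:-c,1:] * f0) = m0 + 1" "degree ([:-c,1:] * g0) = n0 + 1"
    "degree f0 = m0" "degree g0 = n0"
    using nz degree_linear_mult[of f0 c] degree_linear_mult[of g0 c] by (simp_all add: m0_def n0_def del: mult_pCons_left)
  have k1: "k \<ge> 1" and kE: "k - 1 \<le> E" and E1: "1 \<le> E" using d unfolding k_def E_def m0_def n0_def by auto
  have k': "m0 + n0 - 2 * (d - 1) = k" and E': "m0 + n0 - (d - 1) - 1 = E - 1"
    using d unfolding k_def E_def m0_def n0_def by auto
  have rows: "sres_row (m0+1) (n0+1) d ([:-c,1:] * f0) ([:-c,1:] * g0) i =
      [:-c,1:] * sres_row m0 n0 (d - 1) f0 g0 i" for i
    using d unfolding sres_row_def
    by (auto simp: m0_def n0_def ac_simps simp del: mult_pCons_left mult_pCons_right)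
  have "Sres d ([:-c,1:] * f0) ([:-c,1:] * g0) =
        det (sylv_mat k E (\<lambda>i. [:-c,1:] * sres_row m0 n0 (d - 1) f0 g0 i))"
    unfolding Sres_eq_det_sylv_mat degs k_def[symmetric] E_def[symmetric] rows ..
  also have "\<dots> = [:-c,1:] * det (sylv_mat k (E - 1) (sres_row m0 n0 (d - 1) f0 g0))"
  proof (rule det_sylv_mat_linear_factor[OF k1 kE E1])
    fix i assume "i < k"
    thus "degree (sres_row m0 n0 (d - 1) f0 g0 i) \<le> E - 1"
      using degree_sres_row[OF degs(3,4), of "d - 1" i] d k' E' unfolding m0_def n0_def by auto
  qed
  also have "\<dots> = [:-c,1:] * Sres (d - 1) f0 g0"
    unfolding Sres_eq_det_sylv_mat degs k' E' ..
  finally show ?thesis .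
qed

lemma Sres_0_linear_factor:
  fixes f0 g0 :: "'a::field poly"
  assumes nz: "f0 \<noteq> 0" "g0 \<noteq> 0"
  shows "Sres 0 ([:-c,1:] * f0) ([:-c,1:] * g0) = 0"
proof -
  define m0 n0 where "m0 = degree f0" and "n0 = degree g0"
  define k where "k = (m0 + 1) + (n0 + 1)"
  have degs: "degree ([:-c,1:] * f0) = m0 + 1" "degree ([:-c,1:] * g0) = n0 + 1"
    "degree f0 = m0" "degree g0 = n0"
    using nz degree_linear_mult[of f0 c] degree_linear_mult[of g0 c] by (simp_all add: m0_def n0_def del: mult_pCons_left)
  have k1: "k \<ge> 1" unfolding k_def by auto
  have rows: "sres_row (m0+1) (n0+1) 0 ([:-c,1:] * f0) ([:-c,1:] * g0) i =
      [:-c,1:] * sres_row (m0+1) (n0+1) 0 f0 g0 i" for i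
    unfolding sres_row_def
    by (auto simp: ac_simps simp del: mult_pCons_left mult_pCons_right)
  have "Sres 0 ([:-c,1:] * f0) ([:-c,1:] * g0) =
        det (sylv_mat k (k - 1) (\<lambda>i. [:-c,1:] * sres_row (m0+1) (n0+1) 0 f0 g0 i))"
    unfolding Sres_eq_det_sylv_mat degs rows by (simp add: k_def)
  also have "\<dots> = 0"
  proof (rule det_sylv_mat_linear_factor_eq_0[OF k1])
    fix i assume i: "i < k"
    have "degree (sres_row (m0+1) (n0+1) 0 ([:-c,1:] * f0) ([:-c,1:] * g0) i) \<le> m0 + 1 + (n0 + 1) - 0 - 1"
      by (rule degree_sres_row[OF degs(1,2)]) (use i in \<open>auto simp: k_def\<close>)
    thus "degree ([:-c,1:] * sres_row (m0+1) (n0+1) 0 f0 g0 i) \<le> k - 1"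
      unfolding rows by (simp add: k_def)
  qed
  finally show ?thesis .
qed

lemma Sres_0_one:
  fixes g :: "'a::field poly"
  assumes n: "degree g \<ge> 1"
  shows "Sres 0 1 g = 1"
proof -
  define n where "n = degree g"
  have "Sres 0 1 g = det (sylv_mat n (n - 1) (sres_row 0 n 0 1 g))" unfolding Sres_eq_det_sylv_mat n_def by simp
  also have "\<dots> = (\<Prod>i = 0..<n. sylv_mat n (n - 1) (sres_row 0 n 0 1 g) $$ (i,i))"
  proof (rule det_upper_triangular[of _ n, unfolded prod_list_diag_prod, THEN trans])
    show "upper_triangular (sylv_mat n (n - 1) (sres_row 0 n 0 1 g))"
      unfolding upper_triangular_def sylv_mat_col_def sres_row_def by (auto simp: coeff_monom)
  qed auto
  also have "\<dots> = 1"
    by (rule prod.neutral, auto simp: sylv_mat_col_def sres_row_def coeff_monom)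
  finally show ?thesis .
qed

section \<open>Subresultants depending on a parameter\<close>

lemma coeff_of_int_mult: "coeff (of_int z * p) n = of_int z * coeff p n"
  by (simp add: of_int_poly)

lemma coeff_mult_degree_bound:
  fixes p q :: "'a::comm_semiring_1 poly"
  assumes "degree p \<le> a" "degree q \<le> b"
  shows "coeff (p * q) (a + b) = coeff p a * coeff q b"
proof -
  have "coeff (p * q) (a + b) = (\<Sum>i\<le>a + b. coeff p i * coeff q (a + b - i))" by (rule coeff_mult)
  also have "\<dots> = (\<Sum>i\<in>{a}. coeff p i * coeff q (a + b - i))"
  proof (rule sum.mono_neutral_right)
    show "\<forall>i\<in>{..a + b} - {a}. coeff p i * coeff q (a + b - i) = 0"
    proof
      fix i assume "i \<in> {..a + b} - {a}"
      hence "i < a \<or> i > a" by auto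
      thus "coeff p i * coeff q (a + b - i) = 0"
        using assms by (auto simp: coeff_eq_0)
    qed
  qed auto
  finally show ?thesis by simp
qed

lemma coeff_prod_degree_bound:
  fixes p :: "'b \<Rightarrow> 'a::comm_semiring_1 poly"
  assumes "finite I" "\<And>i. i \<in> I \<Longrightarrow> degree (p i) \<le> b i"
  shows "coeff (\<Prod>i\<in>I. p i) (\<Sum>i\<in>I. b i) = (\<Prod>i\<in>I. coeff (p i) (b i))"
  using assms
proof (induction I rule: finite_induct)
  case (insert x F)
  have "coeff (\<Prod>i\<in>insert x F. p i) (\<Sum>i\<in>insert x F. b i) = coeff (p x * (\<Prod>i\<in>F. p i)) (b x + (\<Sum>i\<in>F. b i))"
    using insert by simp
  also have "\<dots> = coeff (p x) (b x) * coeff (\<Prod>i\<in>F. p i) (\<Sum>i\<in>F. b i)"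
  proof (rule coeff_mult_degree_bound)
    show "degree (prod p F) \<le> sum b F"
      by (rule order.trans[OF degree_prod_sum_le], simp add: insert, rule sum_mono, simp add: insert)
  qed (simp add: insert)
  finally show ?case using insert by simp
qed simp

lemma degree_det_row_bound:
  fixes M :: "'a::comm_ring_1 poly mat"
  assumes M: "M \<in> carrier_mat k k" and b: "\<And>i j. i < k \<Longrightarrow> j < k \<Longrightarrow> degree (M $$ (i,j)) \<le> b i"
  shows "degree (det M) \<le> (\<Sum>i<k. b i)"
  unfolding det_def'[OF M]
proof (rule degree_sum_le)
  fix p assume p: "p \<in> {p. p permutes {0..<k}}"
  have "degree (signof p * (\<Prod>i = 0..<k. M $$ (i, p i))) \<le> degree (\<Prod>i = 0..<k. M $$ (i, p i))"
    by (simp add: of_int_poly degree_smult_le)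
  also have "\<dots> \<le> (\<Sum>i = 0..<k. degree (M $$ (i, p i)))"
    using degree_prod_sum_le[of "{0..<k}" "\<lambda>i. M $$ (i, p i)"] by (simp add: o_def)
  also have "\<dots> \<le> (\<Sum>i = 0..<k. b i)" using p b by (intro sum_mono) (auto simp: permutes_def)
  finally show "degree (signof p * (\<Prod>i = 0..<k. M $$ (i, p i))) \<le> (\<Sum>i<k. b i)"
    by (simp add: atLeast0LessThan)
qed (simp add: finite_permutations)

lemma coeff_det_row_bound:
  fixes M :: "'a::comm_ring_1 poly mat"
  assumes M: "M \<in> carrier_mat k k" and b: "\<And>i j. i < k \<Longrightarrow> j < k \<Longrightarrow> degree (M $$ (i,j)) \<le> b i"
  shows "coeff (det M) (\<Sum>i<k. b i) = det (mat k k (\<lambda>(i,j). coeff (M $$ (i,j)) (b i)))"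
proof -
  have "coeff (det M) (\<Sum>i<k. b i) =
    (\<Sum>p\<in>{p. p permutes {0..<k}}. signof p * coeff (\<Prod>i = 0..<k. M $$ (i, p i)) (\<Sum>i=0..<k. b i))"
    unfolding det_def'[OF M] coeff_sum coeff_of_int_mult by (simp add: atLeast0LessThan)
  also have "\<dots> = (\<Sum>p\<in>{p. p permutes {0..<k}}. signof p * (\<Prod>i = 0..<k. coeff (M $$ (i, p i)) (b i)))"
  proof (rule sum.cong[OF refl])
    fix p assume p: "p \<in> {p. p permutes {0..<k}}"
    have "coeff (\<Prod>i = 0..<k. M $$ (i, p i)) (\<Sum>i=0..<k. b i) = (\<Prod>i = 0..<k. coeff (M $$ (i, p i)) (b i))"
      by (rule coeff_prod_degree_bound) (use p b in \<open>auto simp: permutes_def\<close>)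
    thus "signof p * coeff (\<Prod>i = 0..<k. M $$ (i, p i)) (\<Sum>i=0..<k. b i) =
      signof p * (\<Prod>i = 0..<k. coeff (M $$ (i, p i)) (b i))" by simp
  qed
  also have "\<dots> = det (mat k k (\<lambda>(i,j). coeff (M $$ (i,j)) (b i)))"
    unfolding det_def'[of "mat k k (\<lambda>(i,j). coeff (M $$ (i,j)) (b i))" k, OF mat_carrier]
  proof (rule sum.cong[OF refl])
    fix p assume p: "p \<in> {p. p permutes {0..<k}}"
    have "(\<Prod>i = 0..<k. coeff (M $$ (i, p i)) (b i)) = (\<Prod>i = 0..<k. mat k k (\<lambda>(i,j). coeff (M $$ (i,j)) (b i)) $$ (i, p i))"
      by (rule prod.cong) (use p in \<open>auto simp: permutes_def\<close>)
    thus "signof p * (\<Prod>i = 0..<k. coeff (M $$ (i, p i)) (b i)) =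
      signof p * (\<Prod>i = 0..<k. mat k k (\<lambda>(i,j). coeff (M $$ (i,j)) (b i)) $$ (i, p i))" by simp
  qed
  finally show ?thesis .
qed

text \<open>
  In \<open>'a poly poly\<close> the outer variable is a parameter \<open>Y\<close> and the coefficients are
  polynomials in \<open>x\<close>; \<open>poly P [:c:]\<close> specialises \<open>Y\<close> to the constant \<open>c\<close>.
\<close>
definition inner_coeff :: "'a::comm_ring_1 poly poly \<Rightarrow> nat \<Rightarrow> 'a poly poly" where
  "inner_coeff P e = map_poly (\<lambda>p. [:coeff p e:]) P"

lemma poly_inner_coeff: "poly (inner_coeff P e) [:c:] = [:coeff (poly P [:c:]) e:]"
  unfolding inner_coeff_def
proof (induction P)
  case (pCons a P)
  show ?case by (simp add: map_poly_pCons pCons.IH)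
qed simp

lemma coeff_inner_coeff: "coeff (inner_coeff P e) n = [:coeff (coeff P n) e:]"
  unfolding inner_coeff_def by (simp add: coeff_map_poly)

lemma degree_inner_coeff: "degree (inner_coeff P e) \<le> degree P"
  by (rule degree_le, auto simp: coeff_inner_coeff coeff_eq_0)

definition param_sylv_mat :: "nat \<Rightarrow> nat \<Rightarrow> (nat \<Rightarrow> 'a::comm_ring_1 poly poly) \<Rightarrow> 'a poly poly mat" where
  "param_sylv_mat k E R = mat k k (\<lambda>(i,j). if j = k - 1 then R i else inner_coeff (R i) (E - j))"

lemma param_sylv_mat_carrier[simp]: "param_sylv_mat k E R \<in> carrier_mat k k" unfolding param_sylv_mat_def by auto

lemma poly_det_param_sylv_mat: "poly (det (param_sylv_mat k E R)) [:c:] = det (sylv_mat k E (\<lambda>i. poly (R i) [:c:]))"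
proof -
  interpret h: comm_ring_hom "\<lambda>P. poly P [:c:]" by unfold_locales auto
  have "map_mat (\<lambda>P. poly P [:c:]) (param_sylv_mat k E R) = sylv_mat k E (\<lambda>i. poly (R i) [:c:])"
    by (rule eq_matI, auto simp: param_sylv_mat_def sylv_mat_col_def poly_inner_coeff)
  hence "det (sylv_mat k E (\<lambda>i. poly (R i) [:c:])) = det (map_mat (\<lambda>P. poly P [:c:]) (param_sylv_mat k E R))" by simp
  also have "\<dots> = poly (det (param_sylv_mat k E R)) [:c:]" by (rule h.hom_det)
  finally show ?thesis by simp
qed

lemma degree_det_param_sylv_mat:
  assumes "\<And>i. i < k \<Longrightarrow> degree (R i) \<le> b i"
  shows "degree (det (param_sylv_mat k E R)) \<le> (\<Sum>i<k. b i)"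
  by (rule degree_det_row_bound[OF param_sylv_mat_carrier])
    (use assms in \<open>auto simp: param_sylv_mat_def intro: order.trans[OF degree_inner_coeff]\<close>)

lemma coeff_det_param_sylv_mat:
  assumes "\<And>i. i < k \<Longrightarrow> degree (R i) \<le> b i"
  shows "coeff (det (param_sylv_mat k E R)) (\<Sum>i<k. b i) = det (sylv_mat k E (\<lambda>i. coeff (R i) (b i)))"
proof -
  have "coeff (det (param_sylv_mat k E R)) (\<Sum>i<k. b i) = det (mat k k (\<lambda>(i,j). coeff (param_sylv_mat k E R $$ (i,j)) (b i)))"
    by (rule coeff_det_row_bound[OF param_sylv_mat_carrier])
      (use assms in \<open>auto simp: param_sylv_mat_def intro: order.trans[OF degree_inner_coeff]\<close>)
  also have "mat k k (\<lambda>(i,j). coeff (param_sylv_mat k E R $$ (i,j)) (b i)) = sylv_mat k E (\<lambda>i. coeff (R i) (b i))"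
    by (rule eq_matI, auto simp: param_sylv_mat_def sylv_mat_col_def coeff_inner_coeff)
  finally show ?thesis .
qed

lemma det_sylv_mat_smult_rows:
  fixes a :: "nat \<Rightarrow> 'a::comm_ring_1"
  shows "det (sylv_mat k E (\<lambda>i. smult (a i) (r i))) = smult (\<Prod>i<k. a i) (det (sylv_mat k E r))"
proof -
  define D where "D = mat k k (\<lambda>(i,j). if i = j then [:a i:] else 0)"
  have eq: "sylv_mat k E (\<lambda>i. smult (a i) (r i)) = D * sylv_mat k E r"
  proof (rule eq_matI)
    fix i j assume "i < dim_row (D * sylv_mat k E r)" "j < dim_col (D * sylv_mat k E r)"
    hence i: "i < k" and j: "j < k" by (auto simp: D_def)
    have "(D * sylv_mat k E r) $$ (i,j) = (\<Sum>l\<in>{0..<k}. D $$ (i,l) * sylv_mat k E r $$ (l,j))"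
      using i j by (simp add: scalar_prod_def D_def)
    also have "\<dots> = (\<Sum>l\<in>{0..<k}. if l = i then [:a i:] * sylv_mat k E r $$ (l,j) else 0)"
      by (rule sum.cong, auto simp: D_def i)
    also have "\<dots> = [:a i:] * sylv_mat k E r $$ (i,j)" using i by (simp add: sum.delta)
    also have "\<dots> = sylv_mat k E (\<lambda>i. smult (a i) (r i)) $$ (i,j)" using i j by (auto simp: sylv_mat_col_def)
    finally show "sylv_mat k E (\<lambda>i. smult (a i) (r i)) $$ (i,j) = (D * sylv_mat k E r) $$ (i,j)" by simp
  qed (auto simp: D_def)
  have "det D = (\<Prod>i = 0..<k. D $$ (i,i))"
    by (subst det_upper_triangular[of _ k], auto simp: D_def upper_triangular_def prod_list_diag_prod)
  also have "\<dots> = (\<Prod>i = 0..<k. [:a i:])" by (rule prod.cong, auto simp: D_def)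
  also have "\<dots> = [:\<Prod>i<k. a i:]" by (induct k, auto simp: atLeast0LessThan)
  finally have dD: "det D = [:\<Prod>i<k. a i:]" .
  have "det (D * sylv_mat k E r) = det D * det (sylv_mat k E r)" by (rule det_mult[of _ k], auto simp: D_def)
  thus ?thesis unfolding eq dD by simp
qed

definition x_minus_param :: "'a::comm_ring_1 poly poly" where
  "x_minus_param = [:[:0,1:], -1:]"

lemma poly_x_minus_param[simp]: "poly x_minus_param [:c:] = [:-c,1:]"
  unfolding x_minus_param_def by simp

lemma degree_x_minus_param: "degree (x_minus_param :: 'a::comm_ring_1 poly poly) \<le> 1"
  unfolding x_minus_param_def by simp

definition param_sres_row :: "nat \<Rightarrow> nat \<Rightarrow> nat \<Rightarrow> 'a::comm_ring_1 poly \<Rightarrow> 'a poly \<Rightarrow> nat \<Rightarrow> 'a poly poly" where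
  "param_sres_row m n d f0 g i = (if i < n - d then [:monom 1 (n - d - 1 - i) * f0:] * x_minus_param
      else [:monom 1 (m - d - 1 - (i - (n - d))) * g:])"

definition param_Sres :: "nat \<Rightarrow> 'a::comm_ring_1 poly \<Rightarrow> 'a poly \<Rightarrow> 'a poly poly" where
  "param_Sres d f0 g = det (param_sylv_mat (degree f0 + 1 + degree g - 2 * d) (degree f0 + 1 + degree g - d - 1)
     (param_sres_row (degree f0 + 1) (degree g) d f0 g))"

lemma sum_indicator_lessThan: "(\<Sum>i<k. (if i < a then 1 else 0::nat)) = min a k"
  by (induct k) auto

lemma prod_indicator_lessThan: "(\<Prod>i<k. (if i < a then x else 1)) = x ^ (min a k)"
proof (induct k)
  case (Suc k)
  show ?case
  proof (cases "k < a")
    case True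
    hence "min a (Suc k) = Suc k" "min a k = k" by auto
    thus ?thesis using Suc True by (simp add: power_Suc2)
  qed (use Suc in \<open>auto simp: min_def\<close>)
qed simp

lemma poly_param_sres_row: "poly (param_sres_row m n d f0 g i) [:c:] = sres_row m n d (f0 * [:-c,1:]) g i"
  unfolding param_sres_row_def sres_row_def by (auto simp: ac_simps simp del: mult_pCons_left mult_pCons_right)

lemma degree_param_sres_row: "degree (param_sres_row m n d f0 g i) \<le> (if i < n - d then 1 else 0)"
  unfolding param_sres_row_def
  using order.trans[OF degree_mult_le, of "[:monom 1 (n - d - 1 - i) * f0:]" x_minus_param 1] degree_x_minus_param
  by auto

lemma poly_param_Sres:
  fixes f0 g :: "'a::field poly"
  assumes "f0 \<noteq> 0"
  shows "poly (param_Sres d f0 g) [:c:] = Sres d (f0 * [:-c,1:]) g"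
proof -
  have "degree (f0 * [:-c,1:]) = degree f0 + 1" using assms by (subst degree_mult_eq) auto
  thus ?thesis unfolding param_Sres_def poly_det_param_sylv_mat poly_param_sres_row Sres_eq_det_sylv_mat
    by simp
qed

lemma degree_param_Sres:
  assumes "d \<le> degree f0 + 1" "d \<le> degree g"
  shows "degree (param_Sres d f0 g) \<le> degree g - d"
proof -
  have "degree (param_Sres d f0 g) \<le> (\<Sum>i<degree f0 + 1 + degree g - 2 * d. if i < degree g - d then 1 else 0)"
    unfolding param_Sres_def by (rule degree_det_param_sylv_mat, rule degree_param_sres_row)
  also have "\<dots> = degree g - d" unfolding sum_indicator_lessThan using assms by simp
  finally show ?thesis .
qed

lemma det_unit_first_col:
  fixes M :: "'a::comm_ring_1 mat"
  assumes M: "M \<in> carrier_mat k k" and i0: "i0 < k"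
    and col: "\<And>i. i < k \<Longrightarrow> M $$ (i, 0) = (if i = i0 then 1 else 0)"
  shows "det M = (-1)^i0 * det (mat_delete M i0 0)"
proof -
  have "det M = (\<Sum>i<k. M $$ (i, 0) * cofactor M i 0)"
    by (rule laplace_expansion_column[OF M]) (use i0 in auto)
  also have "\<dots> = (\<Sum>i<k. if i = i0 then cofactor M i 0 else 0)"
    by (rule sum.cong) (auto simp: col)
  also have "\<dots> = cofactor M i0 0" using i0 by simp
  finally show ?thesis unfolding cofactor_def by simp
qed

lemma mat_delete_sylv_mat_first_col:
  assumes "2 \<le> k" "i0 < k"
  shows "mat_delete (sylv_mat k E r) i0 0 = sylv_mat (k - 1) (E - 1) (\<lambda>i. r (if i < i0 then i else Suc i))"
  by (rule eq_matI) (use assms in \<open>auto simp: mat_delete_def sylv_mat_col_def\<close>)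

lemma coeff_param_Sres_0:
  fixes f0 g :: "'a::field poly"
  assumes g: "lead_coeff g = 1" "degree g \<ge> 1"
  shows "coeff (param_Sres 0 f0 g) (degree g) = Sres 0 f0 g"
proof -
  define m n where "m = degree f0" and "n = degree g"
  define r where "r = (\<lambda>i. if i < n then - (monom 1 (n - 1 - i) * f0) else monom 1 (m - (i - n)) * g)"
  have "coeff (param_Sres 0 f0 g) (\<Sum>i<m + 1 + n. if i < n then 1 else 0) =
      det (sylv_mat (m + 1 + n) (m + n) (\<lambda>i. coeff (param_sres_row (m + 1) n 0 f0 g i) (if i < n then 1 else 0)))"
  proof -
    have "param_Sres 0 f0 g = det (param_sylv_mat (m + 1 + n) (m + n) (param_sres_row (m + 1) n 0 f0 g))"
      unfolding param_Sres_def m_def n_def by simp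
    show ?thesis unfolding \<open>param_Sres 0 f0 g = _\<close>
      by (rule coeff_det_param_sylv_mat) (metis degree_param_sres_row diff_zero)
  qed
  also have "\<dots> = det (sylv_mat (m + 1 + n) (m + n) r)"
    by (rule arg_cong[of _ _ det], rule sylv_mat_col_cong) (auto simp: param_sres_row_def r_def x_minus_param_def)
  also have "\<dots> = (-1)^n * det (sylv_mat (m + n) (m + n - 1) (\<lambda>i. smult (if i < n then -1 else 1) (sres_row m n 0 f0 g i)))"
  proof (subst det_unit_first_col[OF sylv_mat_col_carrier, of n])
    fix i assume i: "i < m + 1 + n"
    have "degree (monom 1 (n - 1 - i) * f0) < m + n" if "i < n"
      using degree_monom_mult_le[of "n - 1 - i" f0] that by (simp add: m_def)
    moreover have "degree (monom 1 (m - (i - n)) * g) < m + n" if "n < i"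
      using degree_monom_mult_le[of "m - (i - n)" g] that i by (simp add: n_def)
    ultimately show "sylv_mat (m + 1 + n) (m + n) r $$ (i, 0) = (if i = n then 1 else 0)"
      using i g unfolding sylv_mat_col_def r_def
      by (auto simp: coeff_eq_0 coeff_monom_mult m_def[symmetric] n_def[symmetric])
  qed (use g in \<open>auto simp: mat_delete_sylv_mat_first_col n_def r_def sres_row_def intro!: arg_cong[of _ _ det] sylv_mat_col_cong\<close>)
  also have "\<dots> = (-1)^n * smult ((-1)^n) (Sres 0 f0 g)"
    by (simp add: det_sylv_mat_smult_rows prod_indicator_lessThan Sres_eq_det_sylv_mat m_def n_def)
  also have "\<dots> = Sres 0 f0 g" by (cases "even n") auto
  finally show ?thesis unfolding sum_indicator_lessThan by (simp add: n_def)
qed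

definition lift_Rpoly :: "'a::field set \<Rightarrow> 'a poly poly" where
  "lift_Rpoly S = (\<Prod>s\<in>S. [:[:-s:], 1:])"

lemma lift_Rpoly_insert: "finite S \<Longrightarrow> c \<notin> S \<Longrightarrow> lift_Rpoly (insert c S) = [:[:-c:],1:] * lift_Rpoly S"
  unfolding lift_Rpoly_def by simp

lemma poly_lift_Rpoly: "finite S \<Longrightarrow> poly (lift_Rpoly S) [:c:] = [:Res_at c S:]"
proof (induction S rule: finite_induct)
  case (insert x F)
  thus ?case by (simp add: lift_Rpoly_insert Res_at_def algebra_simps)
qed (simp add: lift_Rpoly_def Res_at_def)

lemma monic_lift_Rpoly: "finite S \<Longrightarrow> degree (lift_Rpoly S) = card S \<and> lead_coeff (lift_Rpoly S) = 1"
proof (induction S rule: finite_induct)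
  case (insert c S)
  have d: "degree ([:[:-c:],1:] * lift_Rpoly S) = degree [:[:-c:],1:] + degree (lift_Rpoly S)"
    by (rule degree_mult_eq) (use insert in \<open>auto simp del: mult_pCons_left\<close>)
  have l: "lead_coeff ([:[:-c:],1:] * lift_Rpoly S) = lead_coeff [:[:-c:],1:] * lead_coeff (lift_Rpoly S)"
    by (rule lead_coeff_mult)
  show ?case unfolding lift_Rpoly_insert[OF insert(1,2)] using d l insert(1,2) insert.IH
    by (simp del: mult_pCons_left) (metis insert.IH)
qed (simp add: lift_Rpoly_def)

lemma degree_lift_Rpoly[simp]: "finite S \<Longrightarrow> degree (lift_Rpoly S) = card S"
  using monic_lift_Rpoly by blast

lemma coeff_lift_Rpoly_top[simp]: "finite S \<Longrightarrow> coeff (lift_Rpoly S) (card S) = 1"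
  using monic_lift_Rpoly by fastforce

lemma poly_eq_0_by_const_roots:
  fixes P :: "'a::field poly poly"
  assumes "finite Z" and "degree P < card Z" and "\<And>z. z \<in> Z \<Longrightarrow> poly P [:z:] = 0"
  shows "P = 0"
proof (rule poly_eqI_degree[of "(\<lambda>z. [:z:]) ` Z"])
  have "card ((\<lambda>z. [:z:]) ` Z) = card Z" by (rule card_image) (auto intro: inj_onI)
  thus "degree P < card ((\<lambda>z. [:z:]) ` Z)" "degree (0 :: 'a poly poly) < card ((\<lambda>z. [:z:]) ` Z)"
    using assms(2) by simp_all
qed (use assms(3) in auto)

lemma param_Sres_0_Rpoly:
  fixes A0 B :: "'a::field set"
  assumes A0: "finite A0" and B: "finite B" "B \<noteq> {}"
  shows "param_Sres 0 (Rpoly A0) (Rpoly B) = [:Sres 0 (Rpoly A0) (Rpoly B):] * lift_Rpoly B"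
    (is "?S = ?T")
proof -
  have n: "1 \<le> card B" using B by (simp add: Suc_le_eq card_gt_0_iff)
  have "?S - ?T = 0"
  proof (rule poly_eq_0_by_const_roots[OF B(1)])
    have "degree ?S \<le> card B" using degree_param_Sres[of 0 "Rpoly A0" "Rpoly B"] B by simp
    moreover have "degree ?T \<le> card B"
      using degree_mult_le[of "[:Sres 0 (Rpoly A0) (Rpoly B):]" "lift_Rpoly B"] B by simp
    moreover have "coeff (?S - ?T) (card B) = 0"
      using coeff_param_Sres_0[of "Rpoly B" "Rpoly A0"] lead_coeff_Rpoly[OF B(1)] B n by simp
    ultimately show "degree (?S - ?T) < card B"
      using n by (metis degree_diff_le le_neq_implies_less leading_coeff_0_iff not_one_le_zero degree_0)
  next
    fix b assume b: "b \<in> B"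
    have "Rpoly B = Rpoly (B - {b}) * [:-b,1:]"
      using Rpoly_insert[of "B - {b}" b] b B by (simp add: insert_absorb mult.commute)
    hence "poly ?S [:b:] = Sres 0 ([:-b,1:] * Rpoly A0) ([:-b,1:] * Rpoly (B - {b}))"
      by (simp add: poly_param_Sres mult.commute)
    also have "\<dots> = 0" by (rule Sres_0_linear_factor) auto
    finally show "poly (?S - ?T) [:b:] = 0" using b B by (simp add: poly_lift_Rpoly Res_at_eq_0)
  qed
  thus ?thesis by simp
qed

lemma Sres_0_Rpoly:
  fixes A B :: "'a::field set"
  assumes A: "finite A" and B: "finite B" "B \<noteq> {}"
  shows "Sres 0 (Rpoly A) (Rpoly B) = [:Res A B:]"
  using A
proof (induction A rule: finite_induct)
  case empty
  have "degree (Rpoly B) \<ge> 1" using B by (simp add: Suc_le_eq card_gt_0_iff)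
  thus ?case using Sres_0_one[of "Rpoly B"] by simp
next
  case (insert y A0)
  have "Sres 0 (Rpoly (insert y A0)) (Rpoly B) = poly (param_Sres 0 (Rpoly A0) (Rpoly B)) [:y:]"
    by (simp add: poly_param_Sres Rpoly_insert[OF insert(1,2)] mult.commute)
  also have "\<dots> = [:Res (insert y A0) B:]"
    using B insert by (simp add: param_Sres_0_Rpoly poly_lift_Rpoly Res_insert_left mult.commute)
  finally show ?case .
qed

section \<open>The polynomial in the new root\<close>

text \<open>
  For \<open>c \<notin> A0\<close>, the value of \<open>Syl_param A0 B p q\<close> at \<open>Y = c\<close> is
  \<open>R(c, A0) \<cdot> Syl\<^sub>p\<^sub>,\<^sub>q(A0 \<union> {c}, B)\<close> (\<open>poly_Syl_param\<close>): multiplying by \<open>R(c, A0)\<close> clears the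
  denominators in which \<open>c\<close> occurs. \<open>Syl_param_in\<close> and \<open>Syl_param_out\<close> are the summands
  with \<open>c \<in> A'\<close> and \<open>c \<notin> A'\<close>.
\<close>
definition Syl_param_in :: "'a::field set \<Rightarrow> 'a set \<Rightarrow> 'a set \<Rightarrow> 'a set \<Rightarrow> 'a poly poly" where
  "Syl_param_in A0 B A' B' = [: smult (Syl_coeff A0 B A' B') (Rpoly A' * Rpoly B') :] * lift_Rpoly A' * lift_Rpoly B' * x_minus_param"

definition Syl_param_out :: "'a::field set \<Rightarrow> 'a set \<Rightarrow> 'a set \<Rightarrow> 'a set \<Rightarrow> 'a poly poly" where
  "Syl_param_out A0 B A' B' = [: smult ((-1)^card A' * Syl_coeff A0 B A' B') (Rpoly A' * Rpoly B') :] * lift_Rpoly (A0 - A') * lift_Rpoly (B - B')"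

definition Syl_param :: "'a::field set \<Rightarrow> 'a set \<Rightarrow> nat \<Rightarrow> nat \<Rightarrow> 'a poly poly" where
  "Syl_param A0 B p q = (if p = 0 then 0 else (\<Sum>A'\<in>ksubsets (p-1) A0. \<Sum>B'\<in>ksubsets q B. Syl_param_in A0 B A' B'))
     + (\<Sum>A'\<in>ksubsets p A0. \<Sum>B'\<in>ksubsets q B. Syl_param_out A0 B A' B')"

lemma const_mult_poly: "[:a:] * p = smult a p" by simp

lemma smult_sum_right: "smult a (\<Sum>i\<in>S. f i) = (\<Sum>i\<in>S. smult a (f i))"
  by (induct S rule: infinite_finite_induct) (auto simp: smult_add_right)

lemma poly_Syl_param_in: "finite A' \<Longrightarrow> finite B' \<Longrightarrow> poly (Syl_param_in A0 B A' B') [:c:] =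
   smult (Syl_coeff A0 B A' B' * Res_at c A' * Res_at c B') (Rpoly A' * Rpoly B' * [:-c,1:])"
proof -
  assume "finite A'" "finite B'"
  show ?thesis unfolding Syl_param_in_def poly_mult poly_x_minus_param poly_lift_Rpoly[OF \<open>finite A'\<close>] poly_lift_Rpoly[OF \<open>finite B'\<close>]
    by (simp only: poly_pCons poly_0 const_mult_poly mult_zero_right mult_zero_left add_0_right add_0_left mult_smult_left mult_smult_right
       smult_smult ac_simps)
qed

lemma poly_Syl_param_out: "finite A0 \<Longrightarrow> finite B \<Longrightarrow> poly (Syl_param_out A0 B A' B') [:c:] =
   smult ((-1)^card A' * Syl_coeff A0 B A' B' * Res_at c (A0 - A') * Res_at c (B - B')) (Rpoly A' * Rpoly B')"
  unfolding Syl_param_out_def by (simp add: poly_lift_Rpoly algebra_simps)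

lemma Syl_term_new_root_in:
  assumes fin: "finite A0" "finite B" and c: "c \<notin> A0" and A'': "A'' \<subseteq> A0" and B': "B' \<subseteq> B"
  shows "smult (Res_at c A0) (Syl_term (insert c A0) B (insert c A'') B') = poly (Syl_param_in A0 B A'' B') [:c:]"
proof -
  have fA'': "finite A''" using A'' fin finite_subset by auto
  have fB': "finite B'" using B' fin finite_subset by auto
  have cA'': "c \<notin> A''" using c A'' by auto
  have d1: "insert c A0 - insert c A'' = A0 - A''" using c by auto
  have r1: "Res (insert c A'') B' = Res_at c B' * Res A'' B'" by (rule Res_insert_left[OF fA'' cA''])
  have r2: "Res (insert c A'') (A0 - A'') = Res_at c (A0 - A'') * Res A'' (A0 - A'')"
    by (rule Res_insert_left[OF fA'' cA''])
  have r3: "Res_at c A0 = Res_at c A'' * Res_at c (A0 - A'')" by (rule Res_at_split[OF fin(1) A''])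
  have nz: "Res_at c (A0 - A'') \<noteq> 0" "Res A'' (A0 - A'') \<noteq> 0" "Res B' (B - B') \<noteq> 0"
    using c by (auto intro!: Res_at_nonzero Res_nonzero)
  have "Res_at c A0 * Syl_coeff (insert c A0) B (insert c A'') B' = Syl_coeff A0 B A'' B' * Res_at c A'' * Res_at c B'"
    unfolding Syl_coeff_def d1 r1 r2 r3 using nz by (simp add: field_simps)
  thus ?thesis unfolding Syl_term_def poly_Syl_param_in[OF fA'' fB'] Rpoly_insert[OF fA'' cA'']
    by (simp add: ac_simps del: mult_pCons_left mult_pCons_right)
qed

lemma Syl_term_new_root_out:
  assumes fin: "finite A0" "finite B" and c: "c \<notin> A0" and A': "A' \<subseteq> A0" and B': "B' \<subseteq> B"
  shows "smult (Res_at c A0) (Syl_term (insert c A0) B A' B') = poly (Syl_param_out A0 B A' B') [:c:]"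
proof -
  have fA': "finite A'" using A' fin finite_subset by auto
  have fB': "finite B'" using B' fin finite_subset by auto
  have cA': "c \<notin> A'" using c A' by auto
  have d1: "insert c A0 - A' = insert c (A0 - A')" using cA' by auto
  have fD: "finite (A0 - A')" using fin by auto
  have cD: "c \<notin> A0 - A'" using c by auto
  have r1: "Res (insert c (A0 - A')) (B - B') = Res_at c (B - B') * Res (A0 - A') (B - B')"
    by (rule Res_insert_left[OF fD cD])
  have r2: "Res A' (insert c (A0 - A')) = (-1)^card A' * Res_at c A' * Res A' (A0 - A')"
    unfolding Res_insert_right[OF fD cD] prod_diff_eq_Res_at[OF fA'] ..
  have r3: "Res_at c A0 = Res_at c A' * Res_at c (A0 - A')" by (rule Res_at_split[OF fin(1) A'])
  have nz: "Res_at c A' \<noteq> 0" "Res A' (A0 - A') \<noteq> 0" "Res B' (B - B') \<noteq> 0"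
    using cA' by (auto intro!: Res_at_nonzero Res_nonzero)
  have pm: "((-1::'a)^card A') * (-1)^card A' = 1" by (simp add: power_mult_distrib[symmetric])
  have "Res_at c A0 * Syl_coeff (insert c A0) B A' B' = (-1)^card A' * Syl_coeff A0 B A' B' * Res_at c (A0 - A') * Res_at c (B - B')"
    unfolding Syl_coeff_def d1 r1 r2 r3 using nz pm by (simp add: field_simps)
  thus ?thesis unfolding Syl_term_def poly_Syl_param_out[OF fin] by simp
qed

lemma poly_Syl_param:
  assumes fin: "finite A0" "finite B" and c: "c \<notin> A0"
  shows "poly (Syl_param A0 B p q) [:c:] = smult (Res_at c A0) (Syl p q (insert c A0) B)"
proof -
  have "smult (Res_at c A0) (Syl p q (insert c A0) B) =
    (if p = 0 then 0 else (\<Sum>A'\<in>ksubsets (p-1) A0. \<Sum>B'\<in>ksubsets q B. smult (Res_at c A0) (Syl_term (insert c A0) B (insert c A') B')))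
     + (\<Sum>A'\<in>ksubsets p A0. \<Sum>B'\<in>ksubsets q B. smult (Res_at c A0) (Syl_term (insert c A0) B A' B'))"
    unfolding Syl_eq_sum_ksubsets sum_ksubsets_insert[OF fin(1) c] by (simp add: smult_sum_right smult_add_right)
  also have "\<dots> = poly (Syl_param A0 B p q) [:c:]"
  proof -
    have 1: "(\<Sum>A'\<in>ksubsets (p-1) A0. \<Sum>B'\<in>ksubsets q B. smult (Res_at c A0) (Syl_term (insert c A0) B (insert c A') B'))
       = poly (\<Sum>A'\<in>ksubsets (p-1) A0. \<Sum>B'\<in>ksubsets q B. Syl_param_in A0 B A' B') [:c:]"
      unfolding poly_sum by (intro sum.cong refl; auto simp: Syl_term_new_root_in fin c dest!: ksubsetsD)
    have 2: "(\<Sum>A'\<in>ksubsets p A0. \<Sum>B'\<in>ksubsets q B. smult (Res_at c A0) (Syl_term (insert c A0) B A' B'))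
       = poly (\<Sum>A'\<in>ksubsets p A0. \<Sum>B'\<in>ksubsets q B. Syl_param_out A0 B A' B') [:c:]"
      unfolding poly_sum by (intro sum.cong refl; auto simp: Syl_term_new_root_out fin c dest!: ksubsetsD)
    show ?thesis unfolding Syl_param_def poly_add 1 2 by simp
  qed
  finally show ?thesis ..
qed


lemma Syl_param_terms_cancel:
  assumes fin: "finite A0" "finite B" and a: "a \<in> A0" "a \<notin> A''" and A'': "A'' \<subseteq> A0" "card A'' = p - 1"
    and p: "p \<ge> 1" and B': "B' \<subseteq> B"
  shows "poly (Syl_param_in A0 B A'' B') [:a:] + poly (Syl_param_out A0 B (insert a A'') B') [:a:] = 0"
proof -
  have fA'': "finite A''" using A'' fin finite_subset by auto
  have fB': "finite B'" using B' fin finite_subset by auto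
  define C where "C = A0 - insert a A''"
  have fC: "finite C" using fin unfolding C_def by auto
  have aC: "a \<notin> C" unfolding C_def by auto
  have cd: "A0 - A'' = insert a C" using a A'' unfolding C_def by auto
  have cardi: "card (insert a A'') = p" using A'' a fA'' p by auto
  have r1: "Res (insert a C) (B - B') = Res_at a (B - B') * Res C (B - B')" by (rule Res_insert_left[OF fC aC])
  have r2: "Res A'' (insert a C) = (-1)^(p - 1) * Res_at a A'' * Res A'' C"
    unfolding Res_insert_right[OF fC aC] prod_diff_eq_Res_at[OF fA''] A''(2) ..
  have r3: "Res (insert a A'') B' = Res_at a B' * Res A'' B'" by (rule Res_insert_left[OF fA'' a(2)])
  have r4: "Res (insert a A'') C = Res_at a C * Res A'' C" by (rule Res_insert_left[OF fA'' a(2)])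
  have nz: "Res_at a A'' \<noteq> 0" "Res_at a C \<noteq> 0" "Res A'' C \<noteq> 0" "Res B' (B - B') \<noteq> 0"
    using a aC by (auto intro!: Res_at_nonzero Res_nonzero simp: C_def)
  have pm: "(-1::'a)^p = - ((-1)^(p - 1))" using p by (cases p) auto
  have pm2: "((-1::'a)^(p - 1)) * ((-1)^(p - 1)) = 1" by (simp add: power_mult_distrib[symmetric])
  have sc: "Syl_coeff A0 B A'' B' * Res_at a A'' * Res_at a B' +
     (-1)^p * Syl_coeff A0 B (insert a A'') B' * Res_at a C * Res_at a (B - B') = 0"
    unfolding Syl_coeff_def cd C_def[symmetric] r1 r2 r3 r4 pm using nz pm2
    by (simp add: field_simps)
  have "poly (Syl_param_in A0 B A'' B') [:a:] + poly (Syl_param_out A0 B (insert a A'') B') [:a:] =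
      smult (Syl_coeff A0 B A'' B' * Res_at a A'' * Res_at a B' +
        (-1)^p * Syl_coeff A0 B (insert a A'') B' * Res_at a C * Res_at a (B - B')) (Rpoly A'' * Rpoly B' * [:- a, 1:])"
    unfolding poly_Syl_param_in[OF fA'' fB'] poly_Syl_param_out[OF fin] Rpoly_insert[OF fA'' a(2)] cardi C_def[symmetric]
    by (simp add: smult_add_left ac_simps del: mult_pCons_left mult_pCons_right)
  thus ?thesis unfolding sc by simp
qed

lemma poly_Syl_param_in_root:
  "a \<in> A' \<Longrightarrow> finite A' \<Longrightarrow> finite B' \<Longrightarrow> poly (Syl_param_in A0 B A' B') [:a:] = 0"
  by (simp add: poly_Syl_param_in Res_at_eq_0)

lemma poly_Syl_param_out_root:
  "a \<in> A0 - A' \<Longrightarrow> finite A0 \<Longrightarrow> finite B \<Longrightarrow> poly (Syl_param_out A0 B A' B') [:a:] = 0"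
  by (simp add: poly_Syl_param_out Res_at_eq_0)

lemma poly_Syl_param_root:
  assumes fin: "finite A0" "finite B" and a: "a \<in> A0"
  shows "poly (Syl_param A0 B p q) [:a:] = 0"
proof -
  define A1 where "A1 = A0 - {a}"
  have sub: "X \<in> ksubsets k A1 \<Longrightarrow> finite X \<and> a \<notin> X \<and> X \<subseteq> A0" for X k
    using fin unfolding ksubsets_def A1_def by (auto intro: finite_subset)
  have "(\<Sum>A'\<in>ksubsets (p - 1) A0. \<Sum>B'\<in>ksubsets q B. poly (Syl_param_in A0 B A' B') [:a:]) =
      (\<Sum>A'\<in>ksubsets (p - 1) A1. \<Sum>B'\<in>ksubsets q B. poly (Syl_param_in A0 B A' B') [:a:])"
  proof -
    have "(\<Sum>X\<in>ksubsets k A1. \<Sum>B'\<in>ksubsets q B. poly (Syl_param_in A0 B (insert a X) B') [:a:]) = 0" for k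
      using sub by (intro sum.neutral ballI poly_Syl_param_in_root) (auto simp: ksubsets_def intro: finite_subset[OF _ fin(2)])
    thus ?thesis unfolding sum_ksubsets_remove[OF fin(1) a] A1_def[symmetric] by simp
  qed
  moreover have "(\<Sum>A'\<in>ksubsets p A0. \<Sum>B'\<in>ksubsets q B. poly (Syl_param_out A0 B A' B') [:a:]) =
      (if p = 0 then 0 else \<Sum>A'\<in>ksubsets (p - 1) A1. \<Sum>B'\<in>ksubsets q B. poly (Syl_param_out A0 B (insert a A') B') [:a:])"
    unfolding sum_ksubsets_remove[OF fin(1) a] A1_def[symmetric] using sub fin a
    by (auto intro!: sum.neutral poly_Syl_param_out_root)
  moreover have "poly (Syl_param_in A0 B A' B') [:a:] + poly (Syl_param_out A0 B (insert a A') B') [:a:] = 0"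
    if "p \<noteq> 0" "A' \<in> ksubsets (p - 1) A1" "B' \<in> ksubsets q B" for A' B'
    using that sub[OF that(2)] fin a by (intro Syl_param_terms_cancel) (auto dest: ksubsetsD)
  ultimately show ?thesis
    unfolding Syl_param_def by (simp add: poly_sum sum.distrib[symmetric])
qed

lemma degree_Syl_param:
  assumes fin: "finite A0" "finite B"
  shows "degree (Syl_param A0 B p q) \<le> max (p + q) (card A0 + card B - (p + q))"
proof -
  have deg_in: "degree (Syl_param_in A0 B A' B') \<le> p + q"
    if "A' \<in> ksubsets (p - 1) A0" "B' \<in> ksubsets q B" "p \<noteq> 0" for A' B'
  proof -
    have "finite A'" "finite B'" using that fin by (auto dest!: ksubsetsD intro: finite_subset)
    hence "degree (Syl_param_in A0 B A' B') \<le> 0 + card A' + card B' + 1" unfolding Syl_param_in_def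
      using degree_x_minus_param by (intro order.trans[OF degree_mult_le] add_mono) auto
    thus ?thesis using that by (auto dest!: ksubsetsD)
  qed
  have deg_out: "degree (Syl_param_out A0 B A' B') \<le> card A0 + card B - (p + q)"
    if "A' \<in> ksubsets p A0" "B' \<in> ksubsets q B" for A' B'
  proof -
    have "degree (Syl_param_out A0 B A' B') \<le> 0 + card (A0 - A') + card (B - B')" unfolding Syl_param_out_def
      using fin by (intro order.trans[OF degree_mult_le] add_mono) auto
    moreover have "card A' \<le> card A0" "card B' \<le> card B" "card (A0 - A') = card A0 - card A'" "card (B - B') = card B - card B'"
      using that fin by (auto simp: card_mono card_Diff_subset ksubsets_def finite_subset)
    ultimately show ?thesis using that by (auto dest!: ksubsetsD)
  qed
  show ?thesis unfolding Syl_param_def using fin deg_in deg_out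
    by (intro order.trans[OF degree_add_le_max] max.mono) (auto intro!: degree_sum_le)
qed

section \<open>Common roots\<close>

lemma Syl_term_common_root_in:
  assumes fin: "finite A0" "finite B0" and c: "c \<notin> A0" "c \<notin> B0"
    and A'': "A'' \<subseteq> A0" and B': "B' \<subseteq> B0"
  shows "Syl_term (insert c A0) (insert c B0) (insert c A'') B' =
     smult ((-1)^(card B' + card (A0 - A''))) ([:-c,1:] * Syl_term A0 B0 A'' B')"
proof -
  have fA'': "finite A''" using A'' fin finite_subset by auto
  have fB': "finite B'" using B' fin finite_subset by auto
  have cA'': "c \<notin> A''" "c \<notin> A0 - A''" using c A'' by auto
  have cB': "c \<notin> B'" "c \<notin> B0 - B'" using c B' by auto
  have d1: "insert c A0 - insert c A'' = A0 - A''" using c by auto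
  have d2: "insert c B0 - B' = insert c (B0 - B')" using cB' by auto
  have fD: "finite (A0 - A'')" "finite (B0 - B')" using fin by auto
  have r1: "Res (insert c A'') B' = Res_at c B' * Res A'' B'" by (rule Res_insert_left[OF fA'' cA''(1)])
  have r2: "Res (A0 - A'') (insert c (B0 - B')) = (-1)^card (A0 - A'') * Res_at c (A0 - A'') * Res (A0 - A'') (B0 - B')"
    unfolding Res_insert_right[OF fD(2) cB'(2)] prod_diff_eq_Res_at[OF fD(1)] ..
  have r3: "Res (insert c A'') (A0 - A'') = Res_at c (A0 - A'') * Res A'' (A0 - A'')"
    by (rule Res_insert_left[OF fA'' cA''(1)])
  have r4: "Res B' (insert c (B0 - B')) = (-1)^card B' * Res_at c B' * Res B' (B0 - B')"
    unfolding Res_insert_right[OF fD(2) cB'(2)] prod_diff_eq_Res_at[OF fB'] ..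
  have nz: "Res_at c B' \<noteq> 0" "Res_at c (A0 - A'') \<noteq> 0" "Res A'' (A0 - A'') \<noteq> 0" "Res B' (B0 - B') \<noteq> 0"
    using cA'' cB' by (auto intro!: Res_at_nonzero Res_nonzero)
  have pm: "((-1::'a)^card B') * (-1)^card B' = 1" by (simp add: power_mult_distrib[symmetric])
  have "Syl_coeff (insert c A0) (insert c B0) (insert c A'') B' = (-1)^(card B' + card (A0 - A'')) * Syl_coeff A0 B0 A'' B'"
    unfolding Syl_coeff_def d1 d2 r1 r2 r3 r4 power_add using nz pm by (simp add: field_simps)
  thus ?thesis unfolding Syl_term_def Rpoly_insert[OF fA'' cA''(1)]
    by (simp add: ac_simps del: mult_pCons_left mult_pCons_right)
qed

lemma Syl_term_common_root_out:
  assumes fin: "finite A0" "finite B0" and c: "c \<notin> A0" "c \<notin> B0"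
    and A': "A' \<subseteq> A0" and B'': "B'' \<subseteq> B0"
  shows "Syl_term (insert c A0) (insert c B0) A' (insert c B'') = [:-c,1:] * Syl_term A0 B0 A' B''"
proof -
  have fA': "finite A'" using A' fin finite_subset by auto
  have fB'': "finite B''" using B'' fin finite_subset by auto
  have cA': "c \<notin> A'" "c \<notin> A0 - A'" using c A' by auto
  have cB'': "c \<notin> B''" "c \<notin> B0 - B''" using c B'' by auto
  have d1: "insert c B0 - insert c B'' = B0 - B''" using c by auto
  have d2: "insert c A0 - A' = insert c (A0 - A')" using cA' by auto
  have fD: "finite (A0 - A')" "finite (B0 - B'')" using fin by auto
  have r1: "Res A' (insert c B'') = (\<Prod>a\<in>A'. a - c) * Res A' B''" by (rule Res_insert_right[OF fB'' cB''(1)])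
  have r2: "Res (insert c (A0 - A')) (B0 - B'') = Res_at c (B0 - B'') * Res (A0 - A') (B0 - B'')"
    by (rule Res_insert_left[OF fD(1) cA'(2)])
  have r3: "Res A' (insert c (A0 - A')) = (\<Prod>a\<in>A'. a - c) * Res A' (A0 - A')"
    by (rule Res_insert_right[OF fD(1) cA'(2)])
  have r4: "Res (insert c B'') (B0 - B'') = Res_at c (B0 - B'') * Res B'' (B0 - B'')"
    by (rule Res_insert_left[OF fB'' cB''(1)])
  have nz: "(\<Prod>a\<in>A'. a - c) \<noteq> 0" "Res_at c (B0 - B'') \<noteq> 0" "Res A' (A0 - A') \<noteq> 0" "Res B'' (B0 - B'') \<noteq> 0"
    using cA' cB'' fA' by (auto intro!: Res_at_nonzero Res_nonzero simp: prod_zero_iff)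
  have "Syl_coeff (insert c A0) (insert c B0) A' (insert c B'') = Syl_coeff A0 B0 A' B''"
    unfolding Syl_coeff_def d1 d2 r1 r2 r3 r4 using nz by (simp add: field_simps)
  thus ?thesis unfolding Syl_term_def Rpoly_insert[OF fB'' cB''(1)]
    by (simp add: ac_simps del: mult_pCons_left mult_pCons_right)
qed

text \<open>The Pascal-type recurrence satisfied by both sides of the theorem when \<open>A\<close> and \<open>B\<close> share the root \<open>c\<close>.\<close>
definition common_root_step :: "'a::field \<Rightarrow> nat \<Rightarrow> nat \<Rightarrow> nat \<Rightarrow> (nat \<Rightarrow> nat \<Rightarrow> 'a poly) \<Rightarrow> 'a poly" where
  "common_root_step c m p q F = [:-c,1:] *
     ((if p = 0 then 0 else smult ((-1)^(q + (m + 1 - p))) (F (p - 1) q))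
      + (if q = 0 then 0 else F p (q - 1)))"

lemma common_root_step_cong:
  "(p \<noteq> 0 \<Longrightarrow> F (p - 1) q = G (p - 1) q) \<Longrightarrow> (q \<noteq> 0 \<Longrightarrow> F p (q - 1) = G p (q - 1)) \<Longrightarrow>
   common_root_step c m p q F = common_root_step c m p q G"
  unfolding common_root_step_def by (cases "p = 0"; cases "q = 0") (simp_all del: mult_pCons_left)

lemma Syl_term_common_root_both:
  assumes "finite A0" "finite B0" "A' \<subseteq> A0" "B' \<subseteq> B0"
  shows "Syl_term (insert c A0) (insert c B0) (insert c A') (insert c B') = 0"
proof -
  have "Res (insert c A') (insert c B') = 0"
    using assms by (intro Res_eq_0[of _ _ c]) (auto intro: finite_subset)
  thus ?thesis unfolding Syl_term_def Syl_coeff_def by simp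
qed

lemma Syl_term_common_root_neither:
  assumes "finite A0" "finite B0" "c \<notin> A0" "c \<notin> B0" "A' \<subseteq> A0" "B' \<subseteq> B0"
  shows "Syl_term (insert c A0) (insert c B0) A' B' = 0"
proof -
  have "Res (insert c A0 - A') (insert c B0 - B') = 0"
    using assms by (intro Res_eq_0[of _ _ c]) auto
  thus ?thesis unfolding Syl_term_def Syl_coeff_def by simp
qed

lemma Syl_common_root:
  fixes A0 B0 :: "'a::field set"
  assumes fin: "finite A0" "finite B0" and c: "c \<notin> A0" "c \<notin> B0"
  shows "Syl p q (insert c A0) (insert c B0) = common_root_step c (card A0) p q (\<lambda>i j. Syl i j A0 B0)"
proof -
  define A B where "A = insert c A0" and "B = insert c B0"
  define \<sigma> :: 'a where "\<sigma> = (-1)^(q + (card A0 + 1 - p))"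
  have with_c: "(\<Sum>B'\<in>ksubsets q B. Syl_term A B (insert c A') B') =
      (\<Sum>B'\<in>ksubsets q B0. smult \<sigma> ([:-c,1:] * Syl_term A0 B0 A' B'))"
    if A': "A' \<in> ksubsets (p - 1) A0" and p: "p \<noteq> 0" for A'
  proof -
    have "card B' + card (A0 - A') = q + (card A0 + 1 - p)" if "B' \<in> ksubsets q B0" for B'
      using A' that fin p card_mono[OF fin(1)] by (auto simp: card_Diff_subset ksubsets_def finite_subset)
    then show ?thesis
      unfolding B_def sum_ksubsets_insert[OF fin(2) c(2)] A_def \<sigma>_def using A' fin c
      by (auto simp: Syl_term_common_root_both Syl_term_common_root_in ksubsets_def intro!: sum.cong)
  qed
  have without_c: "(\<Sum>B'\<in>ksubsets q B. Syl_term A B A' B') =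
      (if q = 0 then 0 else \<Sum>B'\<in>ksubsets (q - 1) B0. [:-c,1:] * Syl_term A0 B0 A' B')"
    if A': "A' \<in> ksubsets p A0" for A'
    unfolding B_def sum_ksubsets_insert[OF fin(2) c(2)] A_def using A' fin c
    by (auto simp: Syl_term_common_root_neither Syl_term_common_root_out ksubsets_def intro!: sum.cong)
  have "Syl p q A B = (if p = 0 then 0 else \<Sum>A'\<in>ksubsets (p - 1) A0. \<Sum>B'\<in>ksubsets q B. Syl_term A B (insert c A') B')
      + (\<Sum>A'\<in>ksubsets p A0. \<Sum>B'\<in>ksubsets q B. Syl_term A B A' B')"
    unfolding Syl_eq_sum_ksubsets A_def sum_ksubsets_insert[OF fin(1) c(1)] ..
  also have "\<dots> = common_root_step c (card A0) p q (\<lambda>i j. Syl i j A0 B0)"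
    unfolding common_root_step_def Syl_eq_sum_ksubsets \<sigma>_def[symmetric]
    by (simp add: with_c without_c distrib_left sum_distrib_left smult_sum_right mult_smult_right
        del: mult_pCons_left mult_pCons_right cong: sum.cong)
  finally show ?thesis unfolding A_def B_def .
qed

section \<open>Base cases\<close>

lemma Syl_eq_0_card_less: assumes "finite A" "card A < p" shows "Syl p q A B = 0"
  unfolding Syl_eq_sum_ksubsets ksubsets_eq_empty[OF assms] by simp

lemma Syl_empty_left: "Syl 0 q {} B = (\<Sum>X\<in>ksubsets q B. smult (1 / Res X (B - X)) (Rpoly X))"
  by (simp add: Syl_eq_sum_ksubsets ksubsets_0 Syl_term_def Syl_coeff_def)

lemma Syl_empty_right: "Syl q 0 B {} = (\<Sum>X\<in>ksubsets q B. smult (1 / Res X (B - X)) (Rpoly X))"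
  by (simp add: Syl_eq_sum_ksubsets ksubsets_0 Syl_term_def Syl_coeff_def)

lemma Res_at_ksubsets_card_minus_one:
  assumes fin: "finite B" and b: "b \<in> B" and X: "X \<in> ksubsets (card B - 1) B" "X \<noteq> B - {b}"
  shows "Res_at b X = 0"
proof -
  have X': "X \<subseteq> B" "card X = card (B - {b})" using X b fin by (auto simp: ksubsets_def)
  have "b \<in> X"
  proof (rule ccontr)
    assume "b \<notin> X"
    hence "X = B - {b}" using X' fin by (intro card_subset_eq) auto
    thus False using X by simp
  qed
  thus ?thesis using X' fin by (simp add: Res_at_eq_0 finite_subset)
qed

lemma Syl_empty_top:
  fixes B :: "'a::field set"
  assumes fin: "finite B" and n: "card B \<ge> 1"
  shows "Syl 0 (card B - 1) {} B = [:(-1)^(card B - 1):]"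
proof -
  define n where "n = card B"
  define E where "E = (\<Sum>X\<in>ksubsets (n - 1) B. smult (1 / Res X (B - X)) (Rpoly X))"
  have "E = [:(-1)^(n - 1):]"
  proof (rule poly_eqI_degree[of B])
    fix b assume b: "b \<in> B"
    have mem: "B - {b} \<in> ksubsets (n - 1) B" using b fin by (simp add: ksubsets_def n_def)
    have "poly E b = (\<Sum>X\<in>ksubsets (n - 1) B. Res_at b X / Res X (B - X))"
      unfolding E_def poly_sum by (simp add: poly_Rpoly)
    also have "\<dots> = Res_at b (B - {b}) / Res (B - {b}) (B - (B - {b}))"
      unfolding sum.remove[OF finite_ksubsets[OF fin] mem] using fin b
      by (simp add: sum.neutral Res_at_ksubsets_card_minus_one n_def)
    also have "B - (B - {b}) = {b}" using b by auto
    also have "Res (B - {b}) {b} = (-1)^(n - 1) * Res_at b (B - {b})"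
      unfolding Res_eq_nested_prod using prod_diff_eq_Res_at[of "B - {b}" b] fin b by (simp add: n_def)
    also have "Res_at b (B - {b}) / ((-1)^(n - 1) * Res_at b (B - {b})) = (-1)^(n - 1)"
    proof -
      have "Res_at b (B - {b}) \<noteq> 0" by (rule Res_at_nonzero) auto
      moreover have "((-1::'a)^(n - 1)) * (-1)^(n - 1) = 1" by (simp add: power_mult_distrib[symmetric])
      ultimately show ?thesis by (simp add: field_simps)
    qed
    finally show "poly E b = poly [:(-1)^(n - 1):] b" by simp
  next
    have "degree E \<le> n - 1" unfolding E_def
      using fin by (intro degree_sum_le order.trans[OF degree_smult_le]) (auto simp: ksubsets_def finite_subset)
    thus "degree E < card B" using n unfolding n_def by simp
  qed (use n in auto)
  thus ?thesis unfolding Syl_empty_left E_def n_def .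
qed

text \<open>
  \<open>Syl\<^sub>0\<^sub>,\<^sub>q({}, B) = Syl\<^sub>q\<^sub>,\<^sub>0(B, {})\<close>, and writing \<open>B = A0 \<union> {y}\<close>, the latter is obtained from a
  polynomial in \<open>y\<close> of degree \<open>< |A0|\<close> that vanishes on \<open>A0\<close>.
\<close>
lemma Syl_empty_eq_0:
  fixes B :: "'a::field set"
  assumes fin: "finite B" and q: "1 \<le> q" "q + 2 \<le> card B"
  shows "Syl 0 q {} B = 0"
proof -
  obtain y where y: "y \<in> B" using q by fastforce
  define A0 where "A0 = B - {y}"
  have fA0: "finite A0" and yA0: "y \<notin> A0" and cA0: "card A0 = card B - 1"
    using fin y unfolding A0_def by auto
  have "Syl_param A0 {} q 0 = 0"
  proof (rule poly_eq_0_by_const_roots[OF fA0])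
    have "degree (Syl_param A0 {} q 0) \<le> max q (card A0 - q)"
      using degree_Syl_param[OF fA0, of "{}" q 0] by simp
    thus "degree (Syl_param A0 {} q 0) < card A0" using q cA0 by auto
  qed (rule poly_Syl_param_root[OF fA0], auto)
  hence "smult (Res_at y A0) (Syl q 0 (insert y A0) {}) = 0"
    using poly_Syl_param[OF fA0 _ yA0, of "{}" q 0] by simp
  moreover have "Res_at y A0 \<noteq> 0" by (rule Res_at_nonzero[OF yA0])
  moreover have "insert y A0 = B" using y unfolding A0_def by auto
  ultimately have "Syl q 0 B {} = 0" by simp
  thus ?thesis unfolding Syl_empty_left Syl_empty_right[symmetric] .
qed

section \<open>The closed form\<close>

text \<open>
  The right-hand side of the theorem, extended to all \<open>p, q\<close>; for \<open>p + q < |B|\<close> the last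
  branch is exactly the case \<open>m < d = n - 1\<close>.
\<close>
definition Syl_closed_form :: "'a::field set \<Rightarrow> 'a set \<Rightarrow> nat \<Rightarrow> nat \<Rightarrow> 'a poly" where
  "Syl_closed_form A B p q = (if p + q \<le> card A
     then smult ((-1)^(p * (card A - (p + q))) * of_nat ((p + q) choose p)) (Sres (p + q) (Rpoly A) (Rpoly B))
     else if p + q < card B - 1 then 0
     else smult ((-1)^((p + 1) * (card A + card B - 1)) * of_nat (card A choose p)) (Rpoly A))"

lemma Syl_closed_form_low: "p + q \<le> card A \<Longrightarrow> Syl_closed_form A B p q =
    smult ((-1)^(p * (card A - (p + q))) * of_nat ((p + q) choose p)) (Sres (p + q) (Rpoly A) (Rpoly B))"
  unfolding Syl_closed_form_def by simp

lemma Syl_closed_form_mid: "card A < p + q \<Longrightarrow> p + q < card B - 1 \<Longrightarrow> Syl_closed_form A B p q = 0"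
  unfolding Syl_closed_form_def by simp

lemma Syl_closed_form_top: "card A < p + q \<Longrightarrow> card B - 1 \<le> p + q \<Longrightarrow> Syl_closed_form A B p q =
    smult ((-1)^((p + 1) * (card A + card B - 1)) * of_nat (card A choose p)) (Rpoly A)"
  unfolding Syl_closed_form_def by simp

lemma Syl_closed_form_eq_0_card_less: "card A < p \<Longrightarrow> Syl_closed_form A B p q = 0"
  unfolding Syl_closed_form_def by (simp add: binomial_eq_0)

lemma neg_one_power_add_even: "a = b + 2 * k \<Longrightarrow> (-1::'a::ring_1)^a = (-1)^b"
  by (simp add: power_add power_mult)

lemma sign_binomial_low:
  assumes pq: "p + q = d" and d: "1 \<le> d" "d \<le> m + 1"
  shows "(if p = 0 then 0 else (-1)^(q + (m + 1 - p)) * ((-1)^((p - 1) * (m + 1 - d)) * of_nat ((d - 1) choose (p - 1))))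
    + (if q = 0 then 0 else (-1)^(p * (m + 1 - d)) * of_nat ((d - 1) choose p))
    = ((-1)^(p * (m + 1 - d)) * of_nat (d choose p) :: 'a::comm_ring_1)"
proof (cases "p = 0")
  case False
  define r where "r = m + 1 - d"
  have "m + 1 - p = r + q" using pq d by (simp add: r_def)
  moreover have "r + (p - 1) * r = p * r" using False by (cases p) auto
  ultimately
  have "(-1::'a)^(q + (m + 1 - p) + (p - 1) * r) = (-1)^(p * r)"
    by (intro neg_one_power_add_even[of _ _ q]) linarith
  hence sign: "(-1)^(q + (m + 1 - p)) * ((-1)^((p - 1) * r) * x) = (-1)^(p * r) * (x::'a)" for x
    by (metis (no_types) power_add mult.assoc)
  obtain d' where d': "d = Suc d'" using d by (cases d) auto
  have "of_nat (d choose p) = (of_nat ((d - 1) choose (p - 1)) + of_nat ((d - 1) choose p) :: 'a)"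
    using False by (cases p) (simp_all add: d')
  moreover have "q = 0 \<Longrightarrow> (d - 1) choose p = 0" using pq False d' by auto
  ultimately show ?thesis unfolding r_def[symmetric] sign using False
    by (cases "q = 0") (simp_all add: distrib_left binomial_eq_0)
qed (use pq d in simp)

lemma sign_binomial_top:
  assumes pq: "p + q = n" and pm: "p \<le> m + 1" and mn: "m + 1 < n"
  shows "(if p = 0 then 0 else (-1)^(q + (m + 1 - p)) * ((-1)^(p * (m + n - 1)) * of_nat (m choose (p - 1))))
    + (-1)^((p + 1) * (m + n - 1)) * of_nat (m choose p)
    = ((-1)^((p + 1) * (m + n + 1)) * of_nat ((m + 1) choose p) :: 'a::comm_ring_1)"
proof -
  obtain K where K: "m + n = K + 1" using mn by (cases "m + n") auto
  have top: "(-1::'a)^((p + 1) * (m + n + 1)) = (-1)^((p + 1) * (m + n - 1))"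
    by (rule neg_one_power_add_even[of _ _ "p + 1"]) (simp add: K algebra_simps)
  show ?thesis
  proof (cases "p = 0")
    case False
    have "(p + 1) * K = p * K + K" by simp
    hence "(-1::'a)^((p + 1) * K) = (-1)^(q + (m + 1 - p) + p * K)"
      using pq pm K False by (intro neg_one_power_add_even[of _ _ "p - 1"]) linarith
    hence sign: "(-1)^(q + (m + 1 - p)) * ((-1)^(p * K) * x) = (-1)^((p + 1) * K) * (x::'a)" for x
      by (metis (no_types) power_add mult.assoc)
    have "of_nat ((m + 1) choose p) = (of_nat (m choose (p - 1)) + of_nat (m choose p) :: 'a)"
      using False by (cases p) simp_all
    thus ?thesis unfolding top unfolding K diff_add_inverse2 sign using False by (simp add: distrib_left)
  qed (unfold top, simp add: K)
qed

lemma Syl_closed_form_common_root_low: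
  fixes A0 B0 :: "'a::field set"
  assumes fin: "finite A0" "finite B0" and c: "c \<notin> A0" "c \<notin> B0"
    and d: "1 \<le> p + q" "p + q \<le> card A0 + 1" "p + q \<le> card B0"
  shows "Syl_closed_form (insert c A0) (insert c B0) p q =
    common_root_step c (card A0) p q (\<lambda>i j. Syl_closed_form A0 B0 i j)"
proof -
  define m d where "m = card A0" and "d = p + q"
  define S where "S = Sres (d - 1) (Rpoly A0) (Rpoly B0)"
  have low1: "Syl_closed_form A0 B0 (p - 1) q =
      smult ((-1)^((p - 1) * (m + 1 - d)) * of_nat ((d - 1) choose (p - 1))) S" if "p \<noteq> 0"
    using d that by (subst Syl_closed_form_low) (auto simp: m_def d_def S_def Suc_diff_le)
  have low2: "Syl_closed_form A0 B0 p (q - 1) =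
      smult ((-1)^(p * (m + 1 - d)) * of_nat ((d - 1) choose p)) S" if "q \<noteq> 0"
    using d that by (subst Syl_closed_form_low) (auto simp: m_def d_def S_def Suc_diff_le)
  have "Sres d (Rpoly (insert c A0)) (Rpoly (insert c B0)) = [:-c,1:] * S"
    unfolding Rpoly_insert[OF fin(1) c(1)] Rpoly_insert[OF fin(2) c(2)] S_def
    by (rule Sres_linear_factor) (use fin d in \<open>auto simp: d_def\<close>)
  hence "Syl_closed_form (insert c A0) (insert c B0) p q =
      [:-c,1:] * smult ((-1)^(p * (m + 1 - d)) * of_nat (d choose p)) S"
    using d fin c by (simp add: Syl_closed_form_low m_def d_def mult_smult_right)
  also have "\<dots> = [:-c,1:] * smult ((if p = 0 then 0 else (-1)^(q + (m + 1 - p)) *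
        ((-1)^((p - 1) * (m + 1 - d)) * of_nat ((d - 1) choose (p - 1))))
      + (if q = 0 then 0 else (-1)^(p * (m + 1 - d)) * of_nat ((d - 1) choose p))) S"
    by (subst sign_binomial_low) (use d in \<open>auto simp: d_def m_def\<close>)
  also have "\<dots> = common_root_step c m p q (\<lambda>i j. Syl_closed_form A0 B0 i j)"
    unfolding common_root_step_def using low1 low2
    by (cases "p = 0"; cases "q = 0") (simp_all add: smult_add_left del: mult_pCons_left)
  finally show ?thesis unfolding m_def .
qed

lemma Syl_closed_form_common_root_mid:
  fixes A0 B0 :: "'a::field set"
  assumes fin: "finite A0" "finite B0" and c: "c \<notin> A0" "c \<notin> B0"
    and d: "card A0 + 1 < p + q" "p + q < card B0"
  shows "Syl_closed_form (insert c A0) (insert c B0) p q =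
    common_root_step c (card A0) p q (\<lambda>i j. Syl_closed_form A0 B0 i j)"
  unfolding common_root_step_def using fin c d by (simp add: Syl_closed_form_mid)

lemma Syl_closed_form_common_root_top:
  fixes A0 B0 :: "'a::field set"
  assumes fin: "finite A0" "finite B0" and c: "c \<notin> A0" "c \<notin> B0"
    and d: "card A0 + 1 < p + q" "p + q = card B0" and p: "p \<le> card A0 + 1"
  shows "Syl_closed_form (insert c A0) (insert c B0) p q =
    common_root_step c (card A0) p q (\<lambda>i j. Syl_closed_form A0 B0 i j)"
proof -
  define m n where "m = card A0" and "n = card B0"
  have q: "q \<noteq> 0" using d p by auto
  have "Syl_closed_form (insert c A0) (insert c B0) p q =
      [:-c,1:] * smult ((-1)^((p + 1) * (m + n + 1)) * of_nat ((m + 1) choose p)) (Rpoly A0)"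
    using fin c d by (simp add: Syl_closed_form_top Rpoly_insert mult_smult_right m_def n_def)
  also have "\<dots> = [:-c,1:] * smult ((if p = 0 then 0 else (-1)^(q + (m + 1 - p)) *
        ((-1)^(p * (m + n - 1)) * of_nat (m choose (p - 1))))
      + (-1)^((p + 1) * (m + n - 1)) * of_nat (m choose p)) (Rpoly A0)"
    by (subst sign_binomial_top) (use d p in \<open>auto simp: m_def n_def\<close>)
  also have "\<dots> = common_root_step c m p q (\<lambda>i j. Syl_closed_form A0 B0 i j)"
    unfolding common_root_step_def using d q
    by (auto simp: Syl_closed_form_top smult_add_left m_def n_def)
  finally show ?thesis unfolding m_def .
qed

lemma Syl_closed_form_common_root:
  fixes A0 B0 :: "'a::field set"
  assumes "finite A0" "finite B0" "c \<notin> A0" "c \<notin> B0"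
    and "1 \<le> p + q" "p + q \<le> card B0" "p \<le> card A0 + 1"
  shows "Syl_closed_form (insert c A0) (insert c B0) p q =
    common_root_step c (card A0) p q (\<lambda>i j. Syl_closed_form A0 B0 i j)"
  using assms Syl_closed_form_common_root_low[OF assms(1-4)] Syl_closed_form_common_root_mid[OF assms(1-4)]
    Syl_closed_form_common_root_top[OF assms(1-4)]
  by (cases "p + q \<le> card A0 + 1"; cases "p + q < card B0") auto

lemma Syl_closed_form_param:
  fixes A0 B :: "'a::field set"
  assumes fin: "finite A0" "finite B" and d: "p + q < card B"
  obtains T where "degree T \<le> card B - (p + q)"
    and "\<And>c. c \<notin> A0 \<Longrightarrow> poly T [:c:] = Syl_closed_form (insert c A0) B p q"
proof -
  define m n d where "m = card A0" and "n = card B" and "d = p + q"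
  define T where "T = (if d \<le> m + 1
      then smult [:(-1)^(p * (m + 1 - d)) * of_nat (d choose p):] (param_Sres d (Rpoly A0) (Rpoly B))
      else if d < n - 1 then 0
      else smult [:(-1)^((p + 1) * (m + n)) * of_nat ((m + 1) choose p):] ([:Rpoly A0:] * x_minus_param))"
  have "degree T \<le> n - d"
  proof -
    have "degree (param_Sres d (Rpoly A0) (Rpoly B)) \<le> n - d" if "d \<le> m + 1"
      using degree_param_Sres[of d "Rpoly A0" "Rpoly B"] that d fin by (simp add: m_def n_def d_def)
    moreover have "degree ([:Rpoly A0:] * x_minus_param) \<le> 1"
      using degree_mult_le[of "[:Rpoly A0:]" x_minus_param] by (simp add: x_minus_param_def)
    ultimately show ?thesis
      unfolding T_def using d by (auto simp: n_def d_def intro: order.trans[OF degree_smult_le])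
  qed
  moreover have "poly T [:c:] = Syl_closed_form (insert c A0) B p q" if c: "c \<notin> A0" for c
  proof -
    have "Rpoly (insert c A0) = Rpoly A0 * [:-c,1:]"
      by (simp add: Rpoly_insert[OF fin(1) c] mult.commute)
    thus ?thesis unfolding T_def Syl_closed_form_def using fin c
      by (simp add: poly_param_Sres m_def n_def d_def const_mult_poly del: mult_pCons_left mult_pCons_right)
  qed
  ultimately show ?thesis using that unfolding n_def d_def by blast
qed

lemma Syl_eq_closed_form_common_root:
  fixes A0 B0 :: "'a::field set"
  assumes fin: "finite A0" "finite B0" and c: "c \<notin> A0" "c \<notin> B0"
    and d: "1 \<le> p + q" "p + q \<le> card B0" and p: "p \<le> card A0 + 1"
    and IH: "\<And>i j. i + j < card B0 \<Longrightarrow> Syl i j A0 B0 = Syl_closed_form A0 B0 i j"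
  shows "Syl p q (insert c A0) (insert c B0) = Syl_closed_form (insert c A0) (insert c B0) p q"
  unfolding Syl_common_root[OF fin c] Syl_closed_form_common_root[OF fin c d p]
  by (rule common_root_step_cong) (use d in \<open>auto intro: IH\<close>)

lemma Syl_param_eq_lift_Rpoly_mult:
  fixes A0 B :: "'a::field set"
  assumes fin: "finite A0" "finite B" and disj: "A0 \<inter> B = {}" and d: "1 \<le> p + q" "p + q < card B"
    and deg_T: "degree T \<le> card B - (p + q)"
    and poly_T: "\<And>c. c \<notin> A0 \<Longrightarrow> poly T [:c:] = Syl_closed_form (insert c A0) B p q"
    and on_B: "\<And>z. z \<in> B \<Longrightarrow> Syl p q (insert z A0) B = Syl_closed_form (insert z A0) B p q"
  shows "Syl_param A0 B p q = lift_Rpoly A0 * T"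
proof -
  have "Syl_param A0 B p q - lift_Rpoly A0 * T = 0"
  proof (rule poly_eq_0_by_const_roots[of "A0 \<union> B"])
    have "degree (Syl_param A0 B p q) < card A0 + card B"
      using degree_Syl_param[OF fin, of p q] d by auto
    moreover have "degree (lift_Rpoly A0 * T) < card A0 + card B"
      using degree_mult_le[of "lift_Rpoly A0" T] deg_T d fin by auto
    ultimately show "degree (Syl_param A0 B p q - lift_Rpoly A0 * T) < card (A0 \<union> B)"
      using degree_diff_le_max[of "Syl_param A0 B p q" "lift_Rpoly A0 * T"] card_Un_disjoint[OF fin disj]
      by linarith
  next
    fix z assume "z \<in> A0 \<union> B"
    then show "poly (Syl_param A0 B p q - lift_Rpoly A0 * T) [:z:] = 0"
    proof
      assume z: "z \<in> A0"
      show ?thesis using poly_Syl_param_root[OF fin z]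
        by (simp add: poly_lift_Rpoly[OF fin(1)] Res_at_eq_0[OF fin(1) z])
    next
      assume z: "z \<in> B"
      hence "z \<notin> A0" using disj by auto
      thus ?thesis using on_B[OF z] by (simp add: poly_Syl_param[OF fin] poly_lift_Rpoly[OF fin(1)] poly_T)
    qed
  qed (use fin in simp)
  thus ?thesis by simp
qed

lemma Syl_eq_closed_form_new_root:
  fixes A0 B :: "'a::field set"
  assumes fin: "finite A0" "finite B" and y: "y \<notin> A0" and disj: "A0 \<inter> B = {}"
    and d: "1 \<le> p + q" "p + q < card B" and p: "p \<le> card A0 + 1"
    and IH: "\<And>z i j. z \<in> B \<Longrightarrow> i + j < card B - 1 \<Longrightarrow>
      Syl i j A0 (B - {z}) = Syl_closed_form A0 (B - {z}) i j"
  shows "Syl p q (insert y A0) B = Syl_closed_form (insert y A0) B p q"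
proof -
  have on_B: "Syl p q (insert z A0) B = Syl_closed_form (insert z A0) B p q" if z: "z \<in> B" for z
  proof -
    have "Syl p q (insert z A0) (insert z (B - {z})) = Syl_closed_form (insert z A0) (insert z (B - {z})) p q"
      using fin disj d p z by (intro Syl_eq_closed_form_common_root IH) auto
    thus ?thesis using z by (simp only: insert_Diff)
  qed
  obtain T where deg_T: "degree T \<le> card B - (p + q)"
    and poly_T: "\<And>c. c \<notin> A0 \<Longrightarrow> poly T [:c:] = Syl_closed_form (insert c A0) B p q"
    using Syl_closed_form_param[OF fin d(2)] by blast
  have "smult (Res_at y A0) (Syl p q (insert y A0) B) = poly (lift_Rpoly A0 * T) [:y:]"
    by (simp add: poly_Syl_param[OF fin y, symmetric] Syl_param_eq_lift_Rpoly_mult[OF fin disj d deg_T poly_T on_B])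
  also have "\<dots> = smult (Res_at y A0) (Syl_closed_form (insert y A0) B p q)"
    by (simp add: poly_lift_Rpoly[OF fin(1)] poly_T[OF y])
  finally show ?thesis using smult_cancel[OF Res_at_nonzero[OF y]] by blast
qed

lemma Syl_eq_closed_form_0_0:
  fixes A B :: "'a::field set"
  assumes "finite A" "finite B" "B \<noteq> {}"
  shows "Syl 0 0 A B = Syl_closed_form A B 0 0"
proof -
  have "Syl 0 0 A B = [:Res A B:]"
    using assms by (simp add: Syl_eq_sum_ksubsets ksubsets_0 Syl_term_def Syl_coeff_def)
  thus ?thesis using assms by (simp add: Syl_closed_form_low Sres_0_Rpoly)
qed

lemma Syl_eq_closed_form_empty:
  fixes B :: "'a::field set"
  assumes fin: "finite B" and q: "1 \<le> q" "q < card B"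
  shows "Syl 0 q {} B = Syl_closed_form {} B 0 q"
proof (cases "q < card B - 1")
  case True
  thus ?thesis using fin q by (simp add: Syl_empty_eq_0 Syl_closed_form_mid)
next
  case False
  hence "q = card B - 1" using q by simp
  thus ?thesis using Syl_empty_top[OF fin] q by (simp add: Syl_closed_form_top)
qed

lemma Syl_eq_closed_form:
  fixes A B :: "'a::field set"
  assumes "finite A" "finite B" "p + q < card B"
  shows "Syl p q A B = Syl_closed_form A B p q"
  using assms
proof (induction "card A + card B" arbitrary: A B p q rule: less_induct)
  case less
  note fin = less.prems(1,2) and d = less.prems(3)
  have IH: "Syl i j A0 B0 = Syl_closed_form A0 B0 i j"
    if "finite A0" "finite B0" "i + j < card B0" "card A0 + card B0 < card A + card B" for A0 B0 :: "'a set" and i j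
    using less.hyps that by blast
  consider "card A < p" | "p + q = 0" | "A = {}" "p = 0" "1 \<le> q"
    | c where "c \<in> A" "c \<in> B" "p \<le> card A" "1 \<le> p + q"
    | y where "y \<in> A" "A \<inter> B = {}" "p \<le> card A" "1 \<le> p + q"
  proof (cases "card A < p \<or> p + q = 0")
    case False
    hence pq: "p \<le> card A" "1 \<le> p + q" by auto
    show ?thesis
    proof (cases "A \<inter> B = {}")
      case True
      show ?thesis
      proof (cases "A = {}")
        case True
        thus ?thesis using that(3) pq by simp
      qed (use that(5) pq \<open>A \<inter> B = {}\<close> in blast)
    qed (use that(4) pq in blast)
  qed (use that(1,2) in blast)
  then show ?case
  proof cases
    case 1
    thus ?thesis using fin by (simp add: Syl_eq_0_card_less Syl_closed_form_eq_0_card_less)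
  next
    case 2
    thus ?thesis using fin d by (auto intro: Syl_eq_closed_form_0_0)
  next
    case 3
    thus ?thesis using fin d by (simp add: Syl_eq_closed_form_empty)
  next
    case (4 c)
    have "Syl p q (insert c (A - {c})) (insert c (B - {c})) =
        Syl_closed_form (insert c (A - {c})) (insert c (B - {c})) p q"
      using fin d 4 by (intro Syl_eq_closed_form_common_root IH) (auto simp: card_Diff_singleton_if)
    thus ?thesis using 4 by (simp only: insert_Diff)
  next
    case (5 y)
    have "Syl p q (insert y (A - {y})) B = Syl_closed_form (insert y (A - {y})) B p q"
      using fin d 5 by (intro Syl_eq_closed_form_new_root IH) (auto simp: card_Diff_singleton_if)
    thus ?thesis using 5 by (simp only: insert_Diff)
  qed
qed

theorem corollary3p7:
  fixes A B :: "'a::field set" and p q :: nat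
  assumes "finite A" and "finite B"
    and "p \<le> card A" and "q \<le> card B"
    and "p + q \<le> card B - 1" and "card B \<ge> 1"
  shows "let m = card A; n = card B; d = p + q; f = Rpoly A; g = Rpoly B in
     (d \<le> min m (n - 1) \<longrightarrow>
        Syl p q A B = smult ((-1) ^ (p * (m - d)) * of_nat (d choose p)) (Sres d f g)) \<and>
     (m < d \<and> d < n - 1 \<longrightarrow> Syl p q A B = 0) \<and>
     (m < d \<and> d = n - 1 \<longrightarrow>
        Syl p q A B = smult ((-1) ^ ((p + 1) * (m + n - 1)) * of_nat (m choose p)) f)"
proof -
  have "Syl p q A B = Syl_closed_form A B p q"
    using assms by (intro Syl_eq_closed_form) auto
  thus ?thesis unfolding Let_def Syl_closed_form_def using assms by auto
qed

end
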